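(* Fix an integer $N\ge 1$. For real $\mu$, let $\ell^2_\mu\subset\mathbb{C}^\infty$ be the space of sequences with norm $\|\mathbf u\|_{\ell^2_\mu}=\bigl(\sum_{k\ge0}|u_k|^2(k+1)^{2\mu}\bigr)^{1/2}$. Let $\mathcal L$, $\mathcal B$, $D$ and the operators $\mathcal S_\lambda$ be as in the context. Let $\mathbf c\in\mathbb{C}^N$, and let $\mathbf f\in\ell^2_{\lambda-N+1}$ for some $\lambda\in\{D-1,D,D+1,\dots\}$ (the Chebyshev coefficients of the right-hand side). Suppose that $\begin{pmatrix}\mathcal B\\ \mathcal L\end{pmatrix}:\ell^2_{\lambda+1}\to\ell^2_\lambda$ is invertible, and let $\mathbf u\in\ell^2_{\lambda+1}$ be the solution of $\begin{pmatrix}\mathcal B\\ \mathcal L\end{pmatrix}\mathbf u=\begin{pmatrix}\mathbf c\\ \mathcal S_{N-1}\cdots\mathcal S_0\mathbf f\end{pmatrix}$. Let $\mathcal P_n=(I_n,\mathbf 0)$ be the $n\times\infty$ projection onto the first $n$ entries, $A_n=\mathcal P_n\begin{pmatrix}\mathcal B\\ \mathcal L\end{pmatrix}\mathcal P_n^\top$, and define $$\mathbf u_n=A_n^{-1}\mathcal P_n\begin{pmatrix}\mathbf c\\ \mathcal S_{N-1}\cdots\mathcal S_0\mathbf f\end{pmatrix}.$$ Then there is a constant $C$, independent of $n$, such that (for all sufficiently large $n$) $$\|\mathbf u-\mathcal P_n^\top\mathbf u_n\|_{\ell^2_{\lambda+1}}\le C\,\|\mathbf u-\mathcal P_n^\top\mathcal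 P_n\mathbf u\|_{\ell^2_{\lambda+1}}\longrightarrow0\quad(n\to\infty).$$
   Context: Chebyshev polynomials are $T_k(x)=\cos(k\arccos x)$. For integers $\lambda\ge1$, $C^{(\lambda)}_k$ are the ultraspherical polynomials, orthogonal on $[-1,1]$ with weight $(1-x^2)^{\lambda-1/2}$ and normalized so that $C^{(\lambda)}_k(x)=\frac{2^k(\lambda)_k}{k!}x^k+O(x^{k-1})$, $(\lambda)_k=\frac{(\lambda+k-1)!}{(\lambda-1)!}$. Operators act on coefficient sequences indexed from $0$. $(\mathcal D_\lambda\mathbf u)_j=2^{\lambda-1}(\lambda-1)!\,(j+\lambda)u_{j+\lambda}$ (maps Chebyshev coefficients of $u$ to $C^{(\lambda)}$ coefficients of $u^{(\lambda)}$). $(\mathcal S_0\mathbf u)_0=u_0-\tfrac12u_2$, $(\mathcal S_0\mathbf u)_j=\tfrac12(u_j-u_{j+2})$ for $j\ge1$ (Chebyshev to $C^{(1)}$ coefficients); for $\lambda\ge1$, $(\mathcal S_\lambda\mathbf v)_j=\frac{\lambda}{\lambda+j}v_j-\frac{\lambda}{\lambda+j+2}v_{j+2}$ ($C^{(\lambda)}$ to $C^{(\lambda+1)}$ coefficients). $\mathcal M_0[a]$ maps Chebyshev coefficients of $v$ to Chebyshev coefficients of $av$, and for $\lambda\ge1$, $\mathcal M_\lambda[a]$ maps $C^{(\lambda)}$ coefficients of $v$ to $C^{(\lambda)}$ coefficients of $av$. The $N$th order differential operator $u\mapsto u^{(N)}+\sum_{\lambda=0}^{N-1}a^\lambda u^{(\lambda)}$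 on $[-1,1]$ (leading coefficient $1$) is represented on Chebyshev coefficients by $\mathcal L=\mathcal D_N+\sum_{\lambda=1}^{N-1}\mathcal S_{N-1}\cdots\mathcal S_\lambda\mathcal M_\lambda[a^\lambda]\mathcal D_\lambda+\mathcal S_{N-1}\cdots\mathcal S_0\mathcal M_0[a^0]$, where the coefficient functions $a^0,\dots,a^{N-1}$ are sufficiently smooth that each $\mathcal M_\lambda[a^\lambda]$ is bounded on every $\ell^2_\mu$. $\mathcal B$ is a linear operator from sequences to $\mathbb{C}^N$ representing exactly $N$ boundary conditions on the Chebyshev coefficients (e.g. Dirichlet: rows $(T_k(-1))_k$ and $(T_k(1))_k$), and $D$ is an integer such that $\mathcal B:\ell^2_D\to\mathbb{C}^N$ is bounded. $\begin{pmatrix}\mathcal B\\ \mathcal L\end{pmatrix}$ outputs the $N$ entries of $\mathcal B\mathbf u$ followed by $\mathcal L\mathbf u$. *)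

theory Defs
  imports "HOL-Analysis.Analysis"
begin

type_synonym seq = "nat \<Rightarrow> complex"

definition l2 :: "real \<Rightarrow> seq set" where
  "l2 mu = {u. summable (\<lambda>k. (cmod (u k))\<^sup>2 * (real k + 1) powr (2 * mu))}"

definition l2norm :: "real \<Rightarrow> seq \<Rightarrow> real" where
  "l2norm mu u = sqrt (\<Sum>k. (cmod (u k))\<^sup>2 * (real k + 1) powr (2 * mu))"

text \<open>Chebyshev polynomials T_k(x) = cos(k arccos x) and ultraspherical polynomials C^(l)_k
  (three-term recurrence, giving leading coefficient 2^k (l)_k / k!).\<close>
definition cheb :: "nat \<Rightarrow> real \<Rightarrow> real" where
  "cheb k x = cos (real k * arccos x)"

fun gegen :: "nat \<Rightarrow> nat \<Rightarrow> real \<Rightarrow> real" where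
  "gegen l 0 x = 1"
| "gegen l (Suc 0) x = 2 * real l * x"
| "gegen l (Suc (Suc k)) x =
     (2 * x * (real k + 1 + real l) * gegen l (Suc k) x - (real k + 2 * real l) * gegen l k x) / (real k + 2)"

definition basis :: "nat \<Rightarrow> nat \<Rightarrow> real \<Rightarrow> real" where
  "basis l k x = (if l = 0 then cheb k x else gegen l k x)"

definition wt :: "nat \<Rightarrow> real \<Rightarrow> real" where
  "wt l x = (1 - x\<^sup>2) powr (real l - 1/2)"

text \<open>Matrix of the multiplication operator M_l[a]: entry (j,k) is the j-th level-l
  coefficient of a * basis_k.\<close>
definition Mmat :: "nat \<Rightarrow> (real \<Rightarrow> complex) \<Rightarrow> nat \<Rightarrow> nat \<Rightarrow> complex" where
  "Mmat l a j k =
     integral {-1..1} (\<lambda>x. a x * complex_of_real (basis l k x * basis l j x * wt l x))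
     / complex_of_real (integral {-1..1} (\<lambda>x. (basis l j x)\<^sup>2 * wt l x))"

definition Mop :: "nat \<Rightarrow> (real \<Rightarrow> complex) \<Rightarrow> seq \<Rightarrow> seq" where
  "Mop l a v j = (\<Sum>k. Mmat l a j k * v k)"

definition Dop :: "nat \<Rightarrow> seq \<Rightarrow> seq" where
  "Dop l u j = of_real (2 ^ (l - 1) * fact (l - 1) * real (j + l)) * u (j + l)"

definition Sop :: "nat \<Rightarrow> seq \<Rightarrow> seq" where
  "Sop l v j =
     (if l = 0 then (if j = 0 then v 0 - v 2 / 2 else (v j - v (j + 2)) / 2)
      else of_real (real l / (real l + real j)) * v j
           - of_real (real l / (real l + real j + 2)) * v (j + 2))"

text \<open>Schain lo hi v = S_(hi-1) ( ... (S_lo v)); the identity if hi <= lo.\<close>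
primrec Schain :: "nat \<Rightarrow> nat \<Rightarrow> seq \<Rightarrow> seq" where
  "Schain lo 0 v = v"
| "Schain lo (Suc h) v = (if h < lo then v else Sop h (Schain lo h v))"

text \<open>The operator L for u^(N) + sum_{l<N} a_l u^(l).\<close>
definition Lop :: "nat \<Rightarrow> (nat \<Rightarrow> real \<Rightarrow> complex) \<Rightarrow> seq \<Rightarrow> seq" where
  "Lop N a u j =
     Dop N u j
     + (\<Sum>l\<in>{1..<N}. Schain l N (Mop l (a l) (Dop l u)) j)
     + Schain 0 N (Mop 0 (a 0) u) j"

definition Bapp :: "(nat \<Rightarrow> nat \<Rightarrow> complex) \<Rightarrow> seq \<Rightarrow> nat \<Rightarrow> complex" where
  "Bapp b u i = (\<Sum>k. b i k * u k)"

definition BL :: "nat \<Rightarrow> (nat \<Rightarrow> nat \<Rightarrow> complex) \<Rightarrow> (nat \<Rightarrow> real \<Rightarrow> complex) \<Rightarrow> seq \<Rightarrow> seq" where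
  "BL N b a u k = (if k < N then Bapp b u k else Lop N a u (k - N))"

definition trunc :: "nat \<Rightarrow> seq \<Rightarrow> seq" where
  "trunc n u k = (if k < n then u k else 0)"

end

theory Submission
  imports Defs "HOL-Library.Diagonal_Subsequence"
begin

text \<open>Split the system operator \<open>A = (\<B>; \<L>)\<close> as \<open>\<Delta> + K\<close>: \<open>\<Delta>\<close> is diagonal with entries of
  size \<open>\<approx> i + 1\<close> (ones on the boundary rows, the leading coefficient of \<open>\<D>\<^sub>N\<close> elsewhere), and
  \<open>K\<close> collects the boundary rows and the lower-order terms. Each conversion \<open>\<S>\<^sub>l\<close> with \<open>l \<ge> 1\<close>
  gains one order of decay, so \<open>K\<close> is bounded on \<open>\<ell>\<^sup>2\<^sub>\<lambda>\<^sub>+\<^sub>1\<close> and therefore compact into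
  \<open>\<ell>\<^sup>2\<^sub>\<lambda>\<close>. If the finite sections were not uniformly stable, normalised counterexamples
  \<open>w\<close> supported below \<open>n\<close> with \<open>\<parallel>P\<^sub>n A w\<parallel> \<rightarrow> 0\<close> would, by this compactness, have a
  subsequence converging to some \<open>z\<close> with \<open>\<parallel>z\<parallel> = 1\<close> and \<open>A z = 0\<close>, contradicting injectivity.
  Uniform stability gives quasi-optimality as in C\'ea's lemma, by comparing \<open>u\<^sub>n\<close> with \<open>P\<^sub>n u\<close>.\<close>

section \<open>Weighted sequence spaces\<close>

definition l2_weight :: "real \<Rightarrow> nat \<Rightarrow> real" where
  "l2_weight mu k = (real k + 1) powr (2 * mu)"

definition l2sq :: "real \<Rightarrow> seq \<Rightarrow> real" where
  "l2sq mu u = (\<Sum>k. (cmod (u k))\<^sup>2 * l2_weight mu k)"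

lemma l2_iff_summable: "u \<in> l2 mu \<longleftrightarrow> summable (\<lambda>k. (cmod (u k))\<^sup>2 * l2_weight mu k)"
  by (simp add: l2_def l2_weight_def)

lemma l2norm_eq_sqrt_l2sq: "l2norm mu u = sqrt (l2sq mu u)"
  by (simp add: l2norm_def l2sq_def l2_weight_def)

lemma l2_weight_pos: "l2_weight mu k > 0"
  by (simp add: l2_weight_def)

lemma l2_weight_nonneg: "l2_weight mu k \<ge> 0"
  by (simp add: l2_weight_def)

lemma l2_weight_neq_0: "l2_weight mu k \<noteq> 0"
  by (simp add: l2_weight_def)

lemma l2_weight_plus_1: "l2_weight (mu + 1) k = (real k + 1)\<^sup>2 * l2_weight mu k"
proof -
  have "l2_weight (mu + 1) k = (real k + 1) powr (2 * mu + 2)"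
    by (simp add: l2_weight_def algebra_simps)
  also have "\<dots> = (real k + 1) powr 2 * l2_weight mu k"
    by (simp add: l2_weight_def powr_add)
  finally show ?thesis by (simp add: powr_realpow)
qed

lemma l2_weight_mono: "mu \<le> nu \<Longrightarrow> l2_weight mu k \<le> l2_weight nu k"
  unfolding l2_weight_def by (rule powr_mono) auto

lemma l2_weight_shift_le:
  shows "l2_weight mu j \<le> (real s + 1) powr (2 * \<bar>mu\<bar>) * l2_weight mu (j + s)"
    and "l2_weight mu (j + s) \<le> (real s + 1) powr (2 * \<bar>mu\<bar>) * l2_weight mu j"
proof -
  define x y K where "x = real j + 1" and "y = real (j + s) + 1" and "K = real s + 1"
  have x: "1 \<le> x" and xy: "x \<le> y" and y: "1 \<le> y" and yK: "y \<le> K * x" and K: "1 \<le> K"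
    unfolding x_def y_def K_def by (auto simp: algebra_simps)
  have W: "l2_weight mu j = x powr (2 * mu)" "l2_weight mu (j + s) = y powr (2 * mu)"
    unfolding l2_weight_def x_def y_def by simp_all
  have Kp: "1 \<le> K powr (2 * \<bar>mu\<bar>)"
    using K by (simp add: ge_one_powr_ge_zero)
  have "x powr (2 * mu) \<le> K powr (2 * \<bar>mu\<bar>) * y powr (2 * mu)
      \<and> y powr (2 * mu) \<le> K powr (2 * \<bar>mu\<bar>) * x powr (2 * mu)"
  proof (cases "mu \<ge> 0")
    case True
    have "x powr (2 * mu) \<le> y powr (2 * mu)"
      using True x xy by (intro powr_mono2) auto
    moreover have "y powr (2 * mu) \<le> (K * x) powr (2 * mu)"
      using True x yK xy by (intro powr_mono2) auto
    moreover have "(K * x) powr (2 * mu) = K powr (2 * \<bar>mu\<bar>) * x powr (2 * mu)"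
      using True K x by (simp add: powr_mult)
    moreover have "y powr (2 * mu) \<le> K powr (2 * \<bar>mu\<bar>) * y powr (2 * mu)"
      using mult_right_mono[OF Kp, of "y powr (2 * mu)"] by simp
    ultimately show ?thesis by linarith
  next
    case False
    have "y powr (2 * mu) \<le> x powr (2 * mu)"
      using False x xy by (intro powr_mono2') auto
    moreover have "x powr (2 * mu) \<le> (y / K) powr (2 * mu)"
      using False x y K yK by (intro powr_mono2') (auto simp: field_simps)
    moreover have "(y / K) powr (2 * mu) = y powr (2 * mu) / K powr (2 * mu)"
      using y K by (simp add: powr_divide)
    moreover have "\<dots> = K powr (2 * \<bar>mu\<bar>) * y powr (2 * mu)"
      using False K by (simp add: powr_minus_divide[symmetric] powr_minus divide_inverse mult.commute)
    moreover have "x powr (2 * mu) \<le> K powr (2 * \<bar>mu\<bar>) * x powr (2 * mu)"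
      using mult_right_mono[OF Kp, of "x powr (2 * mu)"] by simp
    ultimately show ?thesis by linarith
  qed
  then show "l2_weight mu j \<le> (real s + 1) powr (2 * \<bar>mu\<bar>) * l2_weight mu (j + s)"
    and "l2_weight mu (j + s) \<le> (real s + 1) powr (2 * \<bar>mu\<bar>) * l2_weight mu j"
    unfolding W K_def[symmetric] by blast+
qed

lemma l2sq_term_nonneg: "0 \<le> (cmod (u k))\<^sup>2 * l2_weight mu k"
  by (simp add: l2_weight_nonneg)

lemma l2sq_nonneg: "u \<in> l2 mu \<Longrightarrow> 0 \<le> l2sq mu u"
  unfolding l2sq_def l2_iff_summable by (intro suminf_nonneg) (auto simp: l2sq_term_nonneg)

lemma l2_dominated_shift:
  assumes f: "f \<in> l2 mu" and C: "C \<ge> 0"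
    and le: "\<And>j. (cmod (g j))\<^sup>2 * l2_weight nu j \<le> C * ((cmod (f (j + s)))\<^sup>2 * l2_weight mu (j + s))"
  shows "g \<in> l2 nu \<and> l2sq nu g \<le> C * l2sq mu f"
proof -
  let ?F = "\<lambda>k. (cmod (f k))\<^sup>2 * l2_weight mu k"
  have sF: "summable ?F" using f by (simp add: l2_iff_summable)
  have sFs: "summable (\<lambda>j. ?F (j + s))" using sF summable_iff_shift[of ?F s] by blast
  have sg: "summable (\<lambda>j. (cmod (g j))\<^sup>2 * l2_weight nu j)"
    by (rule summable_comparison_test'[of "\<lambda>j. C * ?F (j + s)" 0])
      (use le sFs in \<open>auto intro: summable_mult simp: l2sq_term_nonneg\<close>)
  have tail: "(\<Sum>j. ?F (j + s)) \<le> l2sq mu f"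
    using suminf_split_initial_segment[OF sF, of s] sum_nonneg[of "{..<s}" ?F]
    by (simp add: l2sq_def l2sq_term_nonneg)
  have "l2sq nu g \<le> (\<Sum>j. C * ?F (j + s))"
    unfolding l2sq_def by (rule suminf_le[OF le sg]) (intro summable_mult sFs)
  also have "\<dots> = C * (\<Sum>j. ?F (j + s))"
    using suminf_mult[OF sFs, of C] by simp
  also have "\<dots> \<le> C * l2sq mu f"
    using tail C by (rule mult_left_mono)
  finally show ?thesis using sg by (simp add: l2_iff_summable)
qed

lemma l2_dominated:
  assumes "f \<in> l2 mu" and "C \<ge> 0"
    and "\<And>j. (cmod (g j))\<^sup>2 * l2_weight nu j \<le> C * ((cmod (f j))\<^sup>2 * l2_weight mu j)"
  shows "g \<in> l2 nu \<and> l2sq nu g \<le> C * l2sq mu f"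
  using l2_dominated_shift[of f mu C g nu 0] assms by simp

lemma l2_antimono: "u \<in> l2 nu \<Longrightarrow> mu \<le> nu \<Longrightarrow> u \<in> l2 mu \<and> l2sq mu u \<le> l2sq nu u"
  using l2_dominated[of u nu 1 u mu] by (simp add: l2_weight_mono mult_left_mono)

lemma norm_add_sq_le: "(cmod (x + y))\<^sup>2 \<le> 2 * (cmod x)\<^sup>2 + 2 * (cmod y)\<^sup>2"
proof -
  have "(cmod (x + y))\<^sup>2 \<le> (cmod x + cmod y)\<^sup>2"
    by (intro power_mono norm_triangle_ineq) auto
  then show ?thesis
    using zero_le_power2[of "cmod x - cmod y"] by (simp add: power2_eq_square algebra_simps)
qed

lemma l2_add:
  assumes f: "f \<in> l2 mu" and g: "g \<in> l2 mu"
  shows "(\<lambda>k. f k + g k) \<in> l2 mu \<and> l2sq mu (\<lambda>k. f k + g k) \<le> 2 * l2sq mu f + 2 * l2sq mu g"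
proof -
  let ?F = "\<lambda>k. (cmod (f k))\<^sup>2 * l2_weight mu k" and ?G = "\<lambda>k. (cmod (g k))\<^sup>2 * l2_weight mu k"
  have sF: "summable ?F" and sG: "summable ?G" using f g by (auto simp: l2_iff_summable)
  have le: "(cmod (f k + g k))\<^sup>2 * l2_weight mu k \<le> 2 * ?F k + 2 * ?G k" for k
    using mult_right_mono[OF norm_add_sq_le l2_weight_nonneg, of "f k" "g k" mu k]
    by (simp add: algebra_simps)
  have s2: "summable (\<lambda>k. 2 * ?F k + 2 * ?G k)"
    by (intro summable_add summable_mult sF sG)
  have sh: "summable (\<lambda>k. (cmod (f k + g k))\<^sup>2 * l2_weight mu k)"
    by (rule summable_comparison_test'[OF s2, of 0])
      (use le l2sq_term_nonneg[of "\<lambda>k. f k + g k" _ mu] in simp)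
  have "l2sq mu (\<lambda>k. f k + g k) \<le> (\<Sum>k. 2 * ?F k + 2 * ?G k)"
    unfolding l2sq_def by (rule suminf_le[OF le sh s2])
  also have "\<dots> = 2 * l2sq mu f + 2 * l2sq mu g"
    unfolding l2sq_def using suminf_add[OF summable_mult[OF sF] summable_mult[OF sG], of 2 2]
      suminf_mult[OF sF, of 2] suminf_mult[OF sG, of 2] by simp
  finally show ?thesis using sh by (simp add: l2_iff_summable)
qed

lemma l2_scale:
  assumes "f \<in> l2 mu"
  shows "(\<lambda>k. x * f k) \<in> l2 mu \<and> l2sq mu (\<lambda>k. x * f k) = (cmod x)\<^sup>2 * l2sq mu f"
proof -
  have sF: "summable (\<lambda>k. (cmod (f k))\<^sup>2 * l2_weight mu k)"
    using assms by (simp add: l2_iff_summable)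
  have "(\<lambda>k. (cmod (x * f k))\<^sup>2 * l2_weight mu k) = (\<lambda>k. (cmod x)\<^sup>2 * ((cmod (f k))\<^sup>2 * l2_weight mu k))"
    by (simp add: norm_mult power_mult_distrib mult.assoc)
  then show ?thesis
    unfolding l2_iff_summable l2sq_def
    using summable_mult[OF sF, of "(cmod x)\<^sup>2"] suminf_mult[OF sF, of "(cmod x)\<^sup>2"] by simp
qed

lemma l2sq_diff_commute: "l2sq mu (\<lambda>k. f k - g k) = l2sq mu (\<lambda>k. g k - f k)"
  by (simp add: l2sq_def norm_minus_commute)

lemma l2_diff:
  assumes f: "f \<in> l2 mu" and g: "g \<in> l2 mu"
  shows "(\<lambda>k. f k - g k) \<in> l2 mu \<and> l2sq mu (\<lambda>k. f k - g k) \<le> 2 * l2sq mu f + 2 * l2sq mu g"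
  using l2_add[OF f l2_scale[OF g, of "-1", THEN conjunct1]] l2_scale[OF g, of "-1"] by simp

lemma l2sq_eq_0_iff: "u \<in> l2 mu \<Longrightarrow> l2sq mu u = 0 \<longleftrightarrow> u = (\<lambda>k. 0)"
  unfolding l2sq_def l2_iff_summable
  by (subst suminf_eq_zero_iff) (auto simp: l2sq_term_nonneg fun_eq_iff l2_weight_neq_0)

lemma finite_support_in_l2: "\<forall>k\<ge>n. v k = 0 \<Longrightarrow> v \<in> l2 mu"
  unfolding l2_iff_summable
  by (rule summable_finite[of "{..<n}"]) (auto simp: not_less)

lemma zero_in_l2: "(\<lambda>k. 0) \<in> l2 mu" and l2sq_zero: "l2sq mu (\<lambda>k. 0) = 0"
  by (auto simp: l2sq_def intro: finite_support_in_l2[of 0])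

lemma trunc_in_l2: "f \<in> l2 mu \<Longrightarrow> trunc n f \<in> l2 mu \<and> l2sq mu (trunc n f) \<le> l2sq mu f"
  using l2_dominated[of f mu 1 "trunc n f" mu] by (auto simp: trunc_def l2sq_term_nonneg)

lemma l2sq_tail_tendsto_0:
  assumes "f \<in> l2 mu"
  shows "(\<lambda>n. l2sq mu (\<lambda>k. f k - trunc n f k)) \<longlonglongrightarrow> 0"
proof -
  let ?F = "\<lambda>k. (cmod (f k))\<^sup>2 * l2_weight mu k"
  have sF: "summable ?F" using assms by (simp add: l2_iff_summable)
  have "l2sq mu (\<lambda>k. f k - trunc n f k) = (\<Sum>k. ?F (k + n))" for n
  proof -
    have G: "(\<lambda>k. (cmod (f k - trunc n f k))\<^sup>2 * l2_weight mu k) = (\<lambda>k. if k < n then 0 else ?F k)"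
      by (auto simp: fun_eq_iff trunc_def)
    have sG: "summable (\<lambda>k. if k < n then 0 else ?F k)"
      using sF summable_iff_shift[of "\<lambda>k. if k < n then 0 else ?F k" n] summable_iff_shift[of ?F n]
      by simp
    show ?thesis
      unfolding l2sq_def G suminf_split_initial_segment[OF sG, of n] by simp
  qed
  then show ?thesis using suminf_exist_split2[OF sF] by simp
qed

lemma l2sq_partial_sum_le:
  "u \<in> l2 mu \<Longrightarrow> (\<Sum>k<m. (cmod (u k))\<^sup>2 * l2_weight mu k) \<le> l2sq mu u"
  using sum_le_suminf[of "\<lambda>k. (cmod (u k))\<^sup>2 * l2_weight mu k" "{..<m}"]
  by (simp add: l2_iff_summable l2sq_def l2sq_term_nonneg)

lemma l2sq_coordinate_le: "u \<in> l2 mu \<Longrightarrow> (cmod (u k))\<^sup>2 * l2_weight mu k \<le> l2sq mu u"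
  using sum_le_suminf[of "\<lambda>k. (cmod (u k))\<^sup>2 * l2_weight mu k" "{k}"]
  by (simp add: l2_iff_summable l2sq_def l2sq_term_nonneg)

lemma l2sq_le_head_plus_tail:
  assumes f: "f \<in> l2 (mu + 1)"
  shows "l2sq mu f \<le> (\<Sum>k<m. (cmod (f k))\<^sup>2 * l2_weight mu k) + l2sq (mu + 1) f / (real m + 1)\<^sup>2"
proof -
  let ?F = "\<lambda>k. (cmod (f k))\<^sup>2 * l2_weight mu k" and ?G = "\<lambda>k. (cmod (f k))\<^sup>2 * l2_weight (mu + 1) k"
  have sF: "summable ?F" using l2_antimono[OF f, of mu] by (simp add: l2_iff_summable)
  have sG: "summable ?G" using f by (simp add: l2_iff_summable)
  have sFm: "summable (\<lambda>j. ?F (j + m))" and sGm: "summable (\<lambda>j. ?G (j + m))"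
    using sF sG summable_iff_shift[of ?F m] summable_iff_shift[of ?G m] by blast+
  have le: "?F (j + m) \<le> ?G (j + m) / (real m + 1)\<^sup>2" for j
  proof -
    have "(real m + 1)\<^sup>2 \<le> (real (j + m) + 1)\<^sup>2"
      by (intro power_mono) auto
    then have "?F (j + m) * (real m + 1)\<^sup>2 \<le> ?F (j + m) * (real (j + m) + 1)\<^sup>2"
      by (intro mult_left_mono l2sq_term_nonneg)
    also have "\<dots> = ?G (j + m)"
      by (simp only: l2_weight_plus_1) (simp add: algebra_simps)
    finally show ?thesis by (simp add: pos_le_divide_eq)
  qed
  have Gtail: "(\<Sum>j. ?G (j + m)) \<le> l2sq (mu + 1) f"
    using suminf_split_initial_segment[OF sG, of m] sum_nonneg[of "{..<m}" ?G]
    by (simp add: l2sq_def l2sq_term_nonneg)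
  have "(\<Sum>j. ?F (j + m)) \<le> (\<Sum>j. ?G (j + m) / (real m + 1)\<^sup>2)"
    by (rule suminf_le[OF le sFm summable_divide[OF sGm]])
  also have "\<dots> = (\<Sum>j. ?G (j + m)) / (real m + 1)\<^sup>2"
    by (rule suminf_divide[OF sGm])
  also have "\<dots> \<le> l2sq (mu + 1) f / (real m + 1)\<^sup>2"
    by (intro divide_right_mono Gtail) simp
  finally have "(\<Sum>j. ?F (j + m)) \<le> l2sq (mu + 1) f / (real m + 1)\<^sup>2" .
  then show ?thesis
    using suminf_split_initial_segment[OF sF, of m] by (simp add: l2sq_def)
qed

lemma l2_bounded_coordinatewise_convergent_subseq:
  fixes y :: "nat \<Rightarrow> seq"
  assumes y: "\<And>n. y n \<in> l2 mu" and M: "\<And>n. l2sq mu (y n) \<le> M"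
  obtains r z where "strict_mono r" and "\<And>k. (\<lambda>i. y (r i) k) \<longlonglongrightarrow> z k"
proof -
  have bnd: "bounded (range (\<lambda>n. y n k))" for k
  proof (rule boundedI)
    fix x assume "x \<in> range (\<lambda>n. y n k)"
    then obtain n where x: "x = y n k" by auto
    have "(cmod (y n k))\<^sup>2 \<le> M / l2_weight mu k"
      using l2sq_coordinate_le[OF y, of n k] M[of n] l2_weight_pos[of mu k] by (simp add: field_simps)
    then show "norm x \<le> sqrt (M / l2_weight mu k)"
      using x real_le_rsqrt by blast
  qed
  interpret ss: subseqs "\<lambda>k s. convergent (\<lambda>i. y (s i) k)"
  proof
    fix k and s :: "nat \<Rightarrow> nat"
    have "bounded (range (\<lambda>i. y (s i) k))"
      by (rule bounded_subset[OF bnd[of k]]) auto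
    then obtain l r where "strict_mono r" "((\<lambda>i. y (s i) k) \<circ> r) \<longlonglongrightarrow> l"
      using bounded_imp_convergent_subsequence by blast
    then show "\<exists>r'. strict_mono r' \<and> convergent (\<lambda>i. y ((s \<circ> r') i) k)"
      by (auto simp: convergent_def o_def)
  qed
  have "convergent (\<lambda>i. y (ss.diagseq i) k)" for k
  proof -
    have "convergent (\<lambda>i. y ((ss.diagseq \<circ> (+) (Suc k)) i) k)"
    proof (rule ss.diagseq_holds)
      fix r' :: "nat \<Rightarrow> nat" and s n
      assume "strict_mono r'" "convergent (\<lambda>i. y (s i) n)"
      then show "convergent (\<lambda>i. y ((s \<circ> r') i) n)"
        using LIMSEQ_subseq_LIMSEQ by (auto simp: convergent_def o_def)
    qed
    then obtain l where "(\<lambda>i. y (ss.diagseq (i + Suc k)) k) \<longlonglongrightarrow> l"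
      by (auto simp: convergent_def o_def add.commute)
    then show ?thesis
      unfolding convergent_def by (blast intro: LIMSEQ_offset)
  qed
  then have "\<And>k. (\<lambda>i. y (ss.diagseq i) k) \<longlonglongrightarrow> lim (\<lambda>i. y (ss.diagseq i) k)"
    by (simp add: convergent_LIMSEQ_iff)
  then show ?thesis by (rule that[OF ss.subseq_diagseq])
qed

lemma l2_coordinatewise_limit:
  fixes y :: "nat \<Rightarrow> seq"
  assumes y: "\<And>n. y n \<in> l2 mu" and M: "\<And>n. l2sq mu (y n) \<le> M"
    and lim: "\<And>k. (\<lambda>i. y i k) \<longlonglongrightarrow> z k"
  shows "z \<in> l2 mu \<and> l2sq mu z \<le> M"
proof -
  have part: "(\<Sum>k<m. (cmod (z k))\<^sup>2 * l2_weight mu k) \<le> M" for m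
  proof (rule LIMSEQ_le_const2)
    show "(\<lambda>i. \<Sum>k<m. (cmod (y i k))\<^sup>2 * l2_weight mu k) \<longlonglongrightarrow> (\<Sum>k<m. (cmod (z k))\<^sup>2 * l2_weight mu k)"
      by (intro tendsto_intros lim)
    show "\<exists>N. \<forall>i\<ge>N. (\<Sum>k<m. (cmod (y i k))\<^sup>2 * l2_weight mu k) \<le> M"
      using l2sq_partial_sum_le[OF y] M order_trans by blast
  qed
  have "summable (\<lambda>k. (cmod (z k))\<^sup>2 * l2_weight mu k)"
    by (rule bounded_imp_summable[where B = M])
      (use part[of "Suc _"] in \<open>auto simp: l2sq_term_nonneg lessThan_Suc_atMost[symmetric]\<close>)
  then show ?thesis
    unfolding l2_iff_summable l2sq_def using suminf_le_const part by blast
qed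

lemma l2sq_tendsto_0_of_coordinatewise:
  assumes d: "\<And>i. d i \<in> l2 (mu + 1)" and M: "\<And>i. l2sq (mu + 1) (d i) \<le> M"
    and lim: "\<And>k. (\<lambda>i. d i k) \<longlonglongrightarrow> 0"
  shows "(\<lambda>i. l2sq mu (d i)) \<longlonglongrightarrow> 0"
proof (rule LIMSEQ_I)
  fix e :: real assume e: "0 < e"
  obtain m :: nat where m: "2 * M / e < real m"
    using reals_Archimedean2 by blast
  have "real m + 1 \<le> (real m + 1)\<^sup>2"
    by (simp add: power2_eq_square)
  then have "2 * M / e < (real m + 1)\<^sup>2"
    using m by linarith
  then have tail: "M / (real m + 1)\<^sup>2 < e / 2"
    using e by (simp add: field_simps)
  have "(\<lambda>i. \<Sum>k<m. (cmod (d i k))\<^sup>2 * l2_weight mu k) \<longlonglongrightarrow> (\<Sum>k<m. (cmod 0)\<^sup>2 * l2_weight mu k)"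
    by (intro tendsto_intros lim)
  then obtain i0 where i0: "\<And>i. i \<ge> i0 \<Longrightarrow> (\<Sum>k<m. (cmod (d i k))\<^sup>2 * l2_weight mu k) < e / 2"
    using LIMSEQ_D[of _ 0 "e / 2"] e by fastforce
  have "norm (l2sq mu (d i) - 0) < e" if "i \<ge> i0" for i
  proof -
    have "l2sq (mu + 1) (d i) / (real m + 1)\<^sup>2 \<le> M / (real m + 1)\<^sup>2"
      using M[of i] by (simp add: divide_right_mono)
    then have "l2sq mu (d i) < e"
      using l2sq_le_head_plus_tail[OF d[of i], of m] i0[OF that] tail by linarith
    moreover have "0 \<le> l2sq mu (d i)"
      using l2_antimono[OF d[of i], of mu] l2sq_nonneg by auto
    ultimately show ?thesis by simp
  qed
  then show "\<exists>i0. \<forall>i\<ge>i0. norm (l2sq mu (d i) - 0) < e" by blast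
qed

lemma l2_compact_embedding:
  fixes y :: "nat \<Rightarrow> seq"
  assumes y: "\<And>n. y n \<in> l2 (mu + 1)" and M: "\<And>n. l2sq (mu + 1) (y n) \<le> M"
  obtains r z where "strict_mono r" and "z \<in> l2 (mu + 1)"
    and "(\<lambda>i. l2sq mu (\<lambda>k. y (r i) k - z k)) \<longlonglongrightarrow> 0"
proof -
  obtain r z where r: "strict_mono r" and lim: "\<And>k. (\<lambda>i. y (r i) k) \<longlonglongrightarrow> z k"
    using l2_bounded_coordinatewise_convergent_subseq[of y "mu + 1" M, OF y M] by blast
  have z: "z \<in> l2 (mu + 1)" and zM: "l2sq (mu + 1) z \<le> M"
    using l2_coordinatewise_limit[of "\<lambda>i. y (r i)", OF y M lim] by auto
  have "(\<lambda>i. l2sq mu (\<lambda>k. y (r i) k - z k)) \<longlonglongrightarrow> 0"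
  proof (rule l2sq_tendsto_0_of_coordinatewise)
    show "(\<lambda>k. y (r i) k - z k) \<in> l2 (mu + 1)" and "l2sq (mu + 1) (\<lambda>k. y (r i) k - z k) \<le> 4 * M" for i
      using l2_diff[OF y z, of "r i"] M[of "r i"] zM by auto
    show "(\<lambda>i. y (r i) k - z k) \<longlonglongrightarrow> 0" for k
      using tendsto_diff[OF lim[of k] tendsto_const[of "z k"]] by simp
  qed
  then show ?thesis
    by (rule that[OF r z])
qed

lemma l2sq_tendsto_0_le:
  assumes "\<And>i. f i \<in> l2 mu" and "\<And>i. l2sq mu (f i) \<le> g i" and "g \<longlonglongrightarrow> 0"
  shows "(\<lambda>i. l2sq mu (f i)) \<longlonglongrightarrow> 0"
  by (rule Lim_null_comparison[OF _ assms(3)]) (simp add: assms(2) l2sq_nonneg[OF assms(1)])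

lemma l2sq_tendsto_0_add:
  assumes f: "\<And>i. f i \<in> l2 mu" and g: "\<And>i. g i \<in> l2 mu"
    and "(\<lambda>i. l2sq mu (f i)) \<longlonglongrightarrow> 0" and "(\<lambda>i. l2sq mu (g i)) \<longlonglongrightarrow> 0"
  shows "(\<lambda>i. l2sq mu (\<lambda>k. f i k + g i k)) \<longlonglongrightarrow> 0"
proof (rule l2sq_tendsto_0_le)
  show "(\<lambda>k. f i k + g i k) \<in> l2 mu" and "l2sq mu (\<lambda>k. f i k + g i k) \<le> 2 * l2sq mu (f i) + 2 * l2sq mu (g i)" for i
    using l2_add[OF f g] by auto
  show "(\<lambda>i. 2 * l2sq mu (f i) + 2 * l2sq mu (g i)) \<longlonglongrightarrow> 0"
    using tendsto_add[OF tendsto_mult_right_zero tendsto_mult_right_zero, OF assms(3,4)] by simp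
qed

lemma l2_limit_unique:
  assumes x: "\<And>i. x i \<in> l2 mu" and y: "y \<in> l2 mu" and y': "y' \<in> l2 mu"
    and "(\<lambda>i. l2sq mu (\<lambda>k. x i k - y k)) \<longlonglongrightarrow> 0" and "(\<lambda>i. l2sq mu (\<lambda>k. x i k - y' k)) \<longlonglongrightarrow> 0"
  shows "y = y'"
proof -
  have "(\<lambda>i. l2sq mu (\<lambda>k. (y k - x i k) + (x i k - y' k))) \<longlonglongrightarrow> 0"
  proof (rule l2sq_tendsto_0_add)
    show "(\<lambda>k. y k - x i k) \<in> l2 mu" and "(\<lambda>k. x i k - y' k) \<in> l2 mu" for i
      using l2_diff[OF y x] l2_diff[OF x y'] by auto
    show "(\<lambda>i. l2sq mu (\<lambda>k. y k - x i k)) \<longlonglongrightarrow> 0"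
      using assms(4) by (simp add: l2sq_diff_commute[of mu y])
  qed (rule assms(5))
  then have "l2sq mu (\<lambda>k. y k - y' k) = 0"
    by (simp add: LIMSEQ_const_iff)
  then show ?thesis
    using l2sq_eq_0_iff[OF l2_diff[OF y y', THEN conjunct1]] by (simp add: fun_eq_iff)
qed

section \<open>Bounded and linear operators\<close>

definition bounded_op :: "real \<Rightarrow> real \<Rightarrow> (seq \<Rightarrow> seq) \<Rightarrow> bool" where
  "bounded_op mu nu T \<longleftrightarrow> (\<exists>C\<ge>0. \<forall>v\<in>l2 mu. T v \<in> l2 nu \<and> l2sq nu (T v) \<le> C * l2sq mu v)"

definition linear_on :: "real \<Rightarrow> (seq \<Rightarrow> seq) \<Rightarrow> bool" where
  "linear_on mu T \<longleftrightarrow> (\<forall>u\<in>l2 mu. \<forall>v\<in>l2 mu. \<forall>x y.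
     T (\<lambda>k. x * u k + y * v k) = (\<lambda>i. x * T u i + y * T v i))"

lemma bounded_opE:
  assumes "bounded_op mu nu T"
  obtains C where "C \<ge> 0" and "\<And>v. v \<in> l2 mu \<Longrightarrow> T v \<in> l2 nu \<and> l2sq nu (T v) \<le> C * l2sq mu v"
  using assms unfolding bounded_op_def by blast

lemma bounded_op_l2: "bounded_op mu nu T \<Longrightarrow> v \<in> l2 mu \<Longrightarrow> T v \<in> l2 nu"
  unfolding bounded_op_def by blast

lemma bounded_op_comp: "bounded_op mu nu T \<Longrightarrow> bounded_op nu rho S \<Longrightarrow> bounded_op mu rho (\<lambda>v. S (T v))"
proof -
  assume T: "bounded_op mu nu T" and S: "bounded_op nu rho S"
  obtain C1 where C1: "C1 \<ge> 0" "\<And>v. v \<in> l2 mu \<Longrightarrow> T v \<in> l2 nu \<and> l2sq nu (T v) \<le> C1 * l2sq mu v"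
    using bounded_opE[OF T] by blast
  obtain C2 where C2: "C2 \<ge> 0" "\<And>v. v \<in> l2 nu \<Longrightarrow> S v \<in> l2 rho \<and> l2sq rho (S v) \<le> C2 * l2sq nu v"
    using bounded_opE[OF S] by blast
  have "S (T v) \<in> l2 rho \<and> l2sq rho (S (T v)) \<le> (C2 * C1) * l2sq mu v" if "v \<in> l2 mu" for v
    using C1(2)[OF that] C2(2)[of "T v"] mult_left_mono[of _ _ C2] C2(1) by fastforce
  then show ?thesis
    unfolding bounded_op_def using C1(1) C2(1) by (intro exI[of _ "C2 * C1"]) auto
qed

lemma bounded_op_mono_target: "bounded_op mu nu T \<Longrightarrow> rho \<le> nu \<Longrightarrow> bounded_op mu rho T"
  unfolding bounded_op_def by (meson l2_antimono order_trans)

lemma bounded_op_id: "bounded_op mu mu (\<lambda>v. v)"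
  unfolding bounded_op_def by (intro exI[of _ 1]) auto

lemma bounded_op_zero: "bounded_op mu nu (\<lambda>v k. 0)"
  unfolding bounded_op_def using zero_in_l2 l2sq_zero by (intro exI[of _ 0]) auto

lemma bounded_op_add:
  assumes "bounded_op mu nu T" and "bounded_op mu nu S"
  shows "bounded_op mu nu (\<lambda>v k. T v k + S v k)"
proof -
  obtain C1 where C1: "C1 \<ge> 0" "\<And>v. v \<in> l2 mu \<Longrightarrow> T v \<in> l2 nu \<and> l2sq nu (T v) \<le> C1 * l2sq mu v"
    using bounded_opE[OF assms(1)] by blast
  obtain C2 where C2: "C2 \<ge> 0" "\<And>v. v \<in> l2 mu \<Longrightarrow> S v \<in> l2 nu \<and> l2sq nu (S v) \<le> C2 * l2sq mu v"
    using bounded_opE[OF assms(2)] by blast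
  have "(\<lambda>k. T v k + S v k) \<in> l2 nu \<and> l2sq nu (\<lambda>k. T v k + S v k) \<le> (2 * C1 + 2 * C2) * l2sq mu v"
    if "v \<in> l2 mu" for v
    using l2_add[of "T v" nu "S v"] C1(2)[OF that] C2(2)[OF that] by (auto simp: algebra_simps)
  then show ?thesis
    unfolding bounded_op_def using C1(1) C2(1) by (intro exI[of _ "2 * C1 + 2 * C2"]) auto
qed

lemma bounded_op_uminus: "bounded_op mu nu T \<Longrightarrow> bounded_op mu nu (\<lambda>v k. - T v k)"
proof -
  have "f \<in> l2 nu \<Longrightarrow> (\<lambda>k. - f k) \<in> l2 nu \<and> l2sq nu (\<lambda>k. - f k) = l2sq nu f" for f
    using l2_scale[of f nu "-1"] by simp
  then show "bounded_op mu nu T \<Longrightarrow> ?thesis"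
    unfolding bounded_op_def by fastforce
qed

lemma bounded_op_diff:
  "bounded_op mu nu T \<Longrightarrow> bounded_op mu nu S \<Longrightarrow> bounded_op mu nu (\<lambda>v k. T v k - S v k)"
  using bounded_op_add[of mu nu T "\<lambda>v k. - S v k"] bounded_op_uminus[of mu nu S] by simp

lemma bounded_op_sum:
  "finite F \<Longrightarrow> (\<And>l. l \<in> F \<Longrightarrow> bounded_op mu nu (T l)) \<Longrightarrow> bounded_op mu nu (\<lambda>v k. \<Sum>l\<in>F. T l v k)"
proof (induction F rule: finite_induct)
  case empty
  then show ?case using bounded_op_zero by simp
next
  case (insert x F)
  then show ?case using bounded_op_add[of mu nu "T x" "\<lambda>v k. \<Sum>l\<in>F. T l v k"] by simp
qed

lemma bounded_op_weighted_shift: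
  assumes C: "C \<ge> 0" and le: "\<And>j. (cmod (g j))\<^sup>2 * l2_weight nu j \<le> C * l2_weight mu (j + s)"
  shows "bounded_op mu nu (\<lambda>v j. g j * v (j + s))"
proof -
  have le': "(cmod (g j * v (j + s)))\<^sup>2 * l2_weight nu j \<le> C * ((cmod (v (j + s)))\<^sup>2 * l2_weight mu (j + s))"
    for v j
    using mult_left_mono[OF le[of j], of "(cmod (v (j + s)))\<^sup>2"]
    by (simp add: norm_mult power_mult_distrib algebra_simps)
  have "v \<in> l2 mu \<Longrightarrow> (\<lambda>j. g j * v (j + s)) \<in> l2 nu \<and> l2sq nu (\<lambda>j. g j * v (j + s)) \<le> C * l2sq mu v"
    for v by (rule l2_dominated_shift[OF _ C le'])
  then show ?thesis
    unfolding bounded_op_def using C by blast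
qed

lemma bounded_op_of_finite_rows:
  assumes C: "C \<ge> 0" and rows: "\<And>v i. v \<in> l2 mu \<Longrightarrow> i < N \<Longrightarrow> (cmod (T v i))\<^sup>2 \<le> C * l2sq mu v"
    and zero: "\<And>v i. N \<le> i \<Longrightarrow> T v i = 0"
  shows "bounded_op mu nu T"
proof -
  have "T v \<in> l2 nu \<and> l2sq nu (T v) \<le> (\<Sum>i<N. C * l2_weight nu i) * l2sq mu v" if v: "v \<in> l2 mu" for v
  proof
    show "T v \<in> l2 nu"
      by (rule finite_support_in_l2[of N]) (simp add: zero)
    have "l2sq nu (T v) = (\<Sum>i<N. (cmod (T v i))\<^sup>2 * l2_weight nu i)"
      unfolding l2sq_def by (rule suminf_finite) (auto simp: zero)
    also have "\<dots> \<le> (\<Sum>i<N. C * l2_weight nu i * l2sq mu v)"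
    proof (rule sum_mono)
      fix i assume "i \<in> {..<N}"
      then show "(cmod (T v i))\<^sup>2 * l2_weight nu i \<le> C * l2_weight nu i * l2sq mu v"
        using mult_right_mono[OF rows[OF v] l2_weight_nonneg, of i nu] by (simp add: algebra_simps)
    qed
    finally show "l2sq nu (T v) \<le> (\<Sum>i<N. C * l2_weight nu i) * l2sq mu v"
      by (simp add: sum_distrib_right)
  qed
  moreover have "(\<Sum>i<N. C * l2_weight nu i) \<ge> 0"
    using C by (intro sum_nonneg) (simp add: l2_weight_nonneg)
  ultimately show ?thesis
    unfolding bounded_op_def by blast
qed

lemma bounded_op_pad:
  assumes T: "bounded_op mu mu T"
  shows "bounded_op mu mu (\<lambda>v i. if i < N then 0 else T v (i - N))"
proof -
  define K where "K = (real N + 1) powr (2 * \<bar>mu\<bar>)"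
  have pad: "bounded_op mu mu (\<lambda>h i. if i < N then 0 else h (i - N))"
    unfolding bounded_op_def
  proof (intro exI[of _ K] conjI ballI)
    fix h assume h: "h \<in> l2 mu"
    define g where "g = (\<lambda>i. if i < N then 0 else h (i - N))"
    let ?G = "\<lambda>i. (cmod (g i))\<^sup>2 * l2_weight mu i" and ?H = "\<lambda>i. (cmod (h i))\<^sup>2 * l2_weight mu i"
    have sH: "summable ?H" using h by (simp add: l2_iff_summable)
    have le: "?G (j + N) \<le> K * ?H j" for j
      using mult_left_mono[OF l2_weight_shift_le(2)[of mu j N], of "(cmod (h j))\<^sup>2"]
      by (simp add: g_def K_def algebra_simps)
    have sGN: "summable (\<lambda>j. ?G (j + N))"
      by (rule summable_comparison_test'[of "\<lambda>j. K * ?H j" 0])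
        (use le in \<open>auto intro: summable_mult sH simp: l2sq_term_nonneg\<close>)
    have sG: "summable ?G" using sGN summable_iff_shift[of ?G N] by blast
    have "l2sq mu g = (\<Sum>j. ?G (j + N))"
      using suminf_split_initial_segment[OF sG, of N] by (simp add: l2sq_def g_def)
    also have "\<dots> \<le> (\<Sum>j. K * ?H j)"
      by (rule suminf_le[OF le sGN]) (intro summable_mult sH)
    also have "\<dots> = K * l2sq mu h"
      unfolding l2sq_def using suminf_mult[OF sH, of K] by simp
    finally show "l2sq mu g \<le> K * l2sq mu h" .
    show "g \<in> l2 mu" using sG by (simp add: l2_iff_summable)
  qed (simp add: K_def)
  show ?thesis using bounded_op_comp[OF T pad] .
qed

lemma linear_onD:
  "linear_on mu T \<Longrightarrow> u \<in> l2 mu \<Longrightarrow> v \<in> l2 mu \<Longrightarrow> T (\<lambda>k. x * u k + y * v k) = (\<lambda>i. x * T u i + y * T v i)"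
  unfolding linear_on_def by blast

lemma linear_on_diff:
  "linear_on mu T \<Longrightarrow> u \<in> l2 mu \<Longrightarrow> v \<in> l2 mu \<Longrightarrow> T (\<lambda>k. u k - v k) = (\<lambda>i. T u i - T v i)"
  using linear_onD[of mu T u v 1 "-1"] by simp

lemma linear_on_scale:
  "linear_on mu T \<Longrightarrow> u \<in> l2 mu \<Longrightarrow> T (\<lambda>k. x * u k) = (\<lambda>i. x * T u i)"
  using linear_onD[of mu T u u x 0] by simp

lemma linear_on_zero: "linear_on mu T \<Longrightarrow> T (\<lambda>k. 0) = (\<lambda>i. 0)"
  using linear_on_scale[of mu T "\<lambda>k. 0" 0] zero_in_l2 by simp

lemma bounded_linear_op_tendsto:
  assumes T: "bounded_op mu nu T" and lin: "linear_on mu T" and v: "\<And>i. v i \<in> l2 mu" and z: "z \<in> l2 mu"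
    and lim: "(\<lambda>i. l2sq mu (\<lambda>k. v i k - z k)) \<longlonglongrightarrow> 0"
  shows "(\<lambda>i. l2sq nu (\<lambda>k. T (v i) k - T z k)) \<longlonglongrightarrow> 0"
proof -
  obtain C where C: "C \<ge> 0" "\<And>v. v \<in> l2 mu \<Longrightarrow> T v \<in> l2 nu \<and> l2sq nu (T v) \<le> C * l2sq mu v"
    using bounded_opE[OF T] by blast
  have "T (\<lambda>k. v i k - z k) = (\<lambda>k. T (v i) k - T z k)" for i
    using linear_on_diff[OF lin v z] .
  then have "(\<lambda>k. T (v i) k - T z k) \<in> l2 nu \<and> l2sq nu (\<lambda>k. T (v i) k - T z k) \<le> C * l2sq mu (\<lambda>k. v i k - z k)" for i
    using C(2)[OF l2_diff[OF v z, THEN conjunct1]] by metis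
  then show ?thesis
    by (intro l2sq_tendsto_0_le[where g = "\<lambda>i. C * l2sq mu (\<lambda>k. v i k - z k)"])
      (auto intro: tendsto_mult_right_zero lim)
qed

lemma bounded_op_of_l2norm_bound:
  assumes "\<And>v. v \<in> l2 mu \<Longrightarrow> T v \<in> l2 nu \<and> l2norm nu (T v) \<le> C * l2norm mu v"
  shows "bounded_op mu nu T"
proof -
  have "l2sq nu (T v) \<le> C\<^sup>2 * l2sq mu v" if v: "v \<in> l2 mu" for v
  proof -
    have Tv: "T v \<in> l2 nu" and le: "sqrt (l2sq nu (T v)) \<le> C * sqrt (l2sq mu v)"
      using assms[OF v] by (auto simp: l2norm_eq_sqrt_l2sq)
    have "l2sq nu (T v) = (sqrt (l2sq nu (T v)))\<^sup>2"
      using l2sq_nonneg[OF Tv] by simp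
    also have "\<dots> \<le> (C * sqrt (l2sq mu v))\<^sup>2"
      using le by (rule power_mono) (simp add: l2sq_nonneg[OF Tv])
    also have "\<dots> = C\<^sup>2 * l2sq mu v"
      using l2sq_nonneg[OF v] by (simp add: power_mult_distrib)
    finally show ?thesis .
  qed
  then show ?thesis
    unfolding bounded_op_def using assms by (intro exI[of _ "C\<^sup>2"]) auto
qed

lemma linear_on_add:
  assumes "linear_on mu T" and "linear_on mu S"
  shows "linear_on mu (\<lambda>v k. T v k + S v k)"
  unfolding linear_on_def
  by (simp add: linear_onD[OF assms(1)] linear_onD[OF assms(2)] fun_eq_iff algebra_simps)

lemma linear_on_sum:
  "finite F \<Longrightarrow> (\<And>l. l \<in> F \<Longrightarrow> linear_on mu (T l)) \<Longrightarrow> linear_on mu (\<lambda>v k. \<Sum>l\<in>F. T l v k)"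
proof (induction F rule: finite_induct)
  case empty
  then show ?case by (simp add: linear_on_def)
next
  case (insert x F)
  then show ?case using linear_on_add[of mu "T x" "\<lambda>v k. \<Sum>l\<in>F. T l v k"] by simp
qed

lemma linear_on_comp:
  assumes "linear_on mu T" and "bounded_op mu nu T" and "linear_on nu S"
  shows "linear_on mu (\<lambda>v. S (T v))"
  unfolding linear_on_def
  by (simp add: linear_onD[OF assms(1)] linear_onD[OF assms(3)] bounded_op_l2[OF assms(2)])

lemma linear_on_pad:
  assumes "linear_on mu T"
  shows "linear_on mu (\<lambda>v i. if i < N then 0 else T v (i - N))"
  unfolding linear_on_def by (simp add: linear_onD[OF assms] fun_eq_iff)

lemma suminf_mult_lincomb:
  fixes m u v :: "nat \<Rightarrow> complex"
  assumes "summable (\<lambda>k. m k * u k)" and "summable (\<lambda>k. m k * v k)"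
  shows "(\<Sum>k. m k * (x * u k + y * v k)) = x * (\<Sum>k. m k * u k) + y * (\<Sum>k. m k * v k)"
proof -
  have "(\<Sum>k. m k * (x * u k + y * v k)) = (\<Sum>k. x * (m k * u k) + y * (m k * v k))"
    by (simp add: algebra_simps)
  also have "\<dots> = (\<Sum>k. x * (m k * u k)) + (\<Sum>k. y * (m k * v k))"
    using assms by (intro suminf_add[symmetric] summable_mult)
  also have "\<dots> = x * (\<Sum>k. m k * u k) + y * (\<Sum>k. m k * v k)"
    using assms by (simp add: suminf_mult)
  finally show ?thesis .
qed

lemma Mop_linear_on:
  assumes "\<And>v j. v \<in> l2 mu \<Longrightarrow> summable (\<lambda>k. Mmat l a j k * v k)"
  shows "linear_on mu (Mop l a)"
  unfolding linear_on_def Mop_def by (simp add: assms fun_eq_iff suminf_mult_lincomb)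

section \<open>The operators of the ultraspherical spectral method\<close>

definition Dop_const :: "nat \<Rightarrow> real" where
  "Dop_const l = 2 ^ (l - 1) * fact (l - 1)"

lemma Dop_const_ge_1: "Dop_const l \<ge> 1"
proof -
  have "(1::real) \<le> 2 ^ (l - 1)" and "(1::real) \<le> fact (l - 1)"
    by simp_all
  then show ?thesis
    unfolding Dop_const_def using mult_mono[of 1 "2 ^ (l - 1)" 1 "fact (l - 1) :: real"] by simp
qed

lemma Dop_eq: "Dop l u j = of_real (Dop_const l * real (j + l)) * u (j + l)"
  by (simp add: Dop_def Dop_const_def)

lemma Dop_bounded: "bounded_op (mu + 1) mu (Dop l)"
proof -
  define K where "K = (real l + 1) powr (2 * \<bar>mu\<bar>)"
  have le: "(cmod (of_real (Dop_const l * real (j + l)) :: complex))\<^sup>2 * l2_weight mu j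
      \<le> (Dop_const l)\<^sup>2 * K * l2_weight (mu + 1) (j + l)" for j
  proof -
    have "cmod (of_real (Dop_const l * real (j + l)) :: complex) \<le> Dop_const l * (real (j + l) + 1)"
      using Dop_const_ge_1[of l] by (simp only: norm_of_real) (simp add: abs_mult)
    then have "(cmod (of_real (Dop_const l * real (j + l)) :: complex))\<^sup>2 \<le> (Dop_const l)\<^sup>2 * (real (j + l) + 1)\<^sup>2"
      by (simp add: power_mult_distrib[symmetric] power_mono)
    moreover have "l2_weight mu j \<le> K * l2_weight mu (j + l)"
      unfolding K_def by (rule l2_weight_shift_le(1))
    ultimately have "(cmod (of_real (Dop_const l * real (j + l)) :: complex))\<^sup>2 * l2_weight mu j
        \<le> ((Dop_const l)\<^sup>2 * (real (j + l) + 1)\<^sup>2) * (K * l2_weight mu (j + l))"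
      by (intro mult_mono) (simp_all add: l2_weight_nonneg)
    then show ?thesis
      by (simp only: l2_weight_plus_1) (simp add: algebra_simps)
  qed
  have "0 \<le> (Dop_const l)\<^sup>2 * K"
    unfolding K_def by simp
  then show ?thesis
    unfolding Dop_eq[abs_def] by (rule bounded_op_weighted_shift[OF _ le])
qed

lemma Dop_lincomb: "Dop l (\<lambda>k. x * u k + y * v k) = (\<lambda>j. x * Dop l u j + y * Dop l v j)"
  by (simp add: fun_eq_iff Dop_def algebra_simps)

lemma Dop_linear_on: "linear_on mu (Dop l)"
  by (simp add: linear_on_def Dop_lincomb)

text \<open>The gain comes from the coefficients \<open>l / (l + j)\<close> of \<open>S\<^sub>l\<close>, which decay like \<open>1 / j\<close>.\<close>

lemma Sop_bounded_gain:
  assumes l: "l \<ge> 1"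
  shows "bounded_op mu (mu + 1) (Sop l)"
proof -
  have coeff: "(cmod (of_real (real l / (real l + real j + s)) :: complex))\<^sup>2 * l2_weight (mu + 1) j
      \<le> (real l)\<^sup>2 * l2_weight mu j" if "s \<ge> 0" for j and s :: real
  proof -
    have "real l * 1 \<le> real l * real l" and "0 \<le> real l * s"
      using l that by (intro mult_left_mono mult_nonneg_nonneg, simp_all)+
    then have "real l * (real j + 1) \<le> real l * (real l + real j + s)"
      by (simp add: algebra_simps)
    then have "real l / (real l + real j + s) * (real j + 1) \<le> real l"
      using l that by (simp add: field_simps)
    then have "(real l / (real l + real j + s) * (real j + 1))\<^sup>2 \<le> (real l)\<^sup>2"
      using that by (intro power_mono) auto
    then have "(real l / (real l + real j + s) * (real j + 1))\<^sup>2 * l2_weight mu j \<le> (real l)\<^sup>2 * l2_weight mu j"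
      by (rule mult_right_mono[OF _ l2_weight_nonneg])
    then show ?thesis
      by (simp only: l2_weight_plus_1 norm_of_real power2_abs power_mult_distrib mult.assoc)
  qed
  have b1: "bounded_op mu (mu + 1) (\<lambda>v j. of_real (real l / (real l + real j + 0)) * v (j + 0))"
    by (rule bounded_op_weighted_shift[where C = "(real l)\<^sup>2"]) (use coeff[of 0] in simp_all)
  have b2: "bounded_op mu (mu + 1) (\<lambda>v j. of_real (real l / (real l + real j + 2)) * v (j + 2))"
  proof (rule bounded_op_weighted_shift[where C = "(real l)\<^sup>2 * 3 powr (2 * \<bar>mu\<bar>)"])
    fix j
    have "(real l)\<^sup>2 * l2_weight mu j \<le> (real l)\<^sup>2 * (3 powr (2 * \<bar>mu\<bar>) * l2_weight mu (j + 2))"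
      using l2_weight_shift_le(1)[of mu j 2] by (intro mult_left_mono) simp_all
    then show "(cmod (of_real (real l / (real l + real j + 2)) :: complex))\<^sup>2 * l2_weight (mu + 1) j
        \<le> (real l)\<^sup>2 * 3 powr (2 * \<bar>mu\<bar>) * l2_weight mu (j + 2)"
      using coeff[of 2 j] by simp
  qed simp
  have "Sop l = (\<lambda>v j. of_real (real l / (real l + real j + 0)) * v (j + 0)
      - of_real (real l / (real l + real j + 2)) * v (j + 2))"
    using l by (auto simp: fun_eq_iff Sop_def)
  then show ?thesis
    using bounded_op_diff[OF b1 b2] by simp
qed

lemma Sop_0_bounded: "bounded_op mu mu (Sop 0)"
proof -
  have b1: "bounded_op mu mu (\<lambda>v j. (if j = 0 then 1 else 1 / 2 :: complex) * v (j + 0))"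
    by (rule bounded_op_weighted_shift[where C = 1])
      (auto simp: l2_weight_nonneg power2_eq_square intro: mult_left_le_one_le)
  have b2: "bounded_op mu mu (\<lambda>v j. (1 / 2 :: complex) * v (j + 2))"
  proof (rule bounded_op_weighted_shift[where C = "3 powr (2 * \<bar>mu\<bar>)"])
    fix j
    have "(cmod (1 / 2 :: complex))\<^sup>2 * l2_weight mu j \<le> l2_weight mu j"
      by (simp add: l2_weight_nonneg power2_eq_square)
    then show "(cmod (1 / 2 :: complex))\<^sup>2 * l2_weight mu j \<le> 3 powr (2 * \<bar>mu\<bar>) * l2_weight mu (j + 2)"
      using l2_weight_shift_le(1)[of mu j 2] by simp
  qed simp
  have "Sop 0 = (\<lambda>v j. (if j = 0 then 1 else 1 / 2 :: complex) * v (j + 0) - (1 / 2 :: complex) * v (j + 2))"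
    by (auto simp: fun_eq_iff Sop_def diff_divide_distrib numeral_2_eq_2)
  then show ?thesis
    using bounded_op_diff[OF b1 b2] by simp
qed

lemma Sop_bounded: "bounded_op mu mu (Sop l)"
  using Sop_0_bounded bounded_op_mono_target[OF Sop_bounded_gain[of l mu], of mu]
  by (cases "l = 0") auto

lemma Schain_bounded: "bounded_op mu mu (Schain lo hi)"
proof (induction hi)
  case 0
  then show ?case using bounded_op_id by simp
next
  case (Suc h)
  then show ?case
    using bounded_op_id[of mu] bounded_op_comp[OF Suc Sop_bounded[of mu h]] by (cases "h < lo") simp_all
qed

lemma Schain_bounded_gain:
  assumes lo: "lo \<ge> 1"
  shows "bounded_op mu (mu + real (hi - lo)) (Schain lo hi)"
proof (induction hi)
  case 0
  then show ?case using bounded_op_id by simp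
next
  case (Suc h)
  show ?case
  proof (cases "h < lo")
    case True
    then show ?thesis using bounded_op_id by simp
  next
    case False
    then have h: "h \<ge> 1" and "real (Suc h - lo) = real (h - lo) + 1"
      using lo by auto
    moreover have "bounded_op mu (mu + real (h - lo) + 1) (\<lambda>v. Sop h (Schain lo h v))"
      by (rule bounded_op_comp[OF Suc Sop_bounded_gain[OF h]])
    ultimately show ?thesis
      using False by (simp add: algebra_simps)
  qed
qed

lemma Sop_lincomb: "Sop l (\<lambda>k. x * u k + y * v k) = (\<lambda>j. x * Sop l u j + y * Sop l v j)"
  by (simp add: fun_eq_iff Sop_def algebra_simps diff_divide_distrib add_divide_distrib)

lemma Schain_lincomb:
  "Schain lo hi (\<lambda>k. x * u k + y * v k) = (\<lambda>j. x * Schain lo hi u j + y * Schain lo hi v j)"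
  by (induction hi) (auto simp: Sop_lincomb)

lemma Schain_linear_on: "linear_on mu (Schain lo hi)"
  by (simp add: linear_on_def Schain_lincomb)

section \<open>The system matrix as a diagonal plus a bounded perturbation\<close>

definition BL_diag :: "nat \<Rightarrow> nat \<Rightarrow> complex" where
  "BL_diag N i = (if i < N then 1 else of_real (Dop_const N * real i))"

definition Lop_lower :: "nat \<Rightarrow> (nat \<Rightarrow> real \<Rightarrow> complex) \<Rightarrow> seq \<Rightarrow> seq" where
  "Lop_lower N a v j =
     (\<Sum>l\<in>{1..<N}. Schain l N (Mop l (a l) (Dop l v)) j) + Schain 0 N (Mop 0 (a 0) v) j"

definition boundary_rows :: "nat \<Rightarrow> (nat \<Rightarrow> nat \<Rightarrow> complex) \<Rightarrow> seq \<Rightarrow> seq" where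
  "boundary_rows N b v i = (if i < N then Bapp b v i - v i else 0)"

definition BL_perturb :: "nat \<Rightarrow> (nat \<Rightarrow> nat \<Rightarrow> complex) \<Rightarrow> (nat \<Rightarrow> real \<Rightarrow> complex) \<Rightarrow> seq \<Rightarrow> seq" where
  "BL_perturb N b a v i = boundary_rows N b v i + (if i < N then 0 else Lop_lower N a v (i - N))"

lemma BL_eq_diag_plus_perturb: "BL N b a v i = BL_diag N i * v i + BL_perturb N b a v i"
proof (cases "i < N")
  case False
  then have "i - N + N = i" by simp
  with False show ?thesis
    by (simp add: BL_def BL_diag_def BL_perturb_def boundary_rows_def Lop_def Lop_lower_def Dop_eq
        algebra_simps)
qed (simp add: BL_def BL_diag_def BL_perturb_def boundary_rows_def)

lemma norm_BL_diag: "cmod (BL_diag N i) = (if i < N then 1 else Dop_const N * real i)"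
  using Dop_const_ge_1[of N] by (auto simp: BL_diag_def abs_mult simp del: of_real_mult)

lemma BL_diag_upper: "(cmod (BL_diag N i))\<^sup>2 \<le> (Dop_const N)\<^sup>2 * (real i + 1)\<^sup>2"
proof -
  have "cmod (BL_diag N i) \<le> Dop_const N * (real i + 1)"
    using Dop_const_ge_1[of N] mult_mono[of 1 "Dop_const N" 1 "real i + 1"]
    by (auto simp: norm_BL_diag)
  then show ?thesis
    by (simp add: power_mono flip: power_mult_distrib)
qed

lemma BL_diag_lower:
  assumes N: "N \<ge> 1"
  shows "(real i + 1)\<^sup>2 \<le> 4 * (real N)\<^sup>2 * (cmod (BL_diag N i))\<^sup>2"
proof -
  have "real i + 1 \<le> 2 * real N * cmod (BL_diag N i)"
  proof (cases "i < N")
    case False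
    have "1 \<le> real N * Dop_const N"
      using N Dop_const_ge_1[of N] mult_mono[of 1 "real N" 1 "Dop_const N"] by simp
    then have "2 * real i \<le> 2 * real N * (Dop_const N * real i)"
      using mult_right_mono[of 1 "real N * Dop_const N" "2 * real i"] by (simp add: algebra_simps)
    moreover have "real i + 1 \<le> 2 * real i"
      using False N by simp
    moreover have "cmod (BL_diag N i) = Dop_const N * real i"
      using False by (simp add: norm_BL_diag)
    ultimately show ?thesis
      by (simp only:)
  qed (simp add: norm_BL_diag)
  then have "(real i + 1)\<^sup>2 \<le> (2 * real N * cmod (BL_diag N i))\<^sup>2"
    by (rule power_mono) simp
  then show ?thesis
    by (simp add: power_mult_distrib)
qed

locale ultraspherical_system =
  fixes N :: nat and a :: "nat \<Rightarrow> real \<Rightarrow> complex" and b :: "nat \<Rightarrow> nat \<Rightarrow> complex" and D :: real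
  assumes N_ge_1: "N \<ge> 1"
    and Mop_bounded: "\<And>l mu. l < N \<Longrightarrow> bounded_op mu mu (Mop l (a l))"
    and Mop_summable: "\<And>l mu v j. l < N \<Longrightarrow> v \<in> l2 mu \<Longrightarrow> summable (\<lambda>k. Mmat l (a l) j k * v k)"
    and Bapp_summable: "\<And>v i. v \<in> l2 D \<Longrightarrow> i < N \<Longrightarrow> summable (\<lambda>k. b i k * v k)"
    and Bapp_bounded: "\<exists>C. \<forall>v\<in>l2 D. \<forall>i<N. cmod (Bapp b v i) \<le> C * l2norm D v"
begin

lemma Mop_a_linear_on: "l < N \<Longrightarrow> linear_on mu (Mop l (a l))"
  by (rule Mop_linear_on) (rule Mop_summable)

lemma Lop_lower_bounded: "bounded_op (mu + 1) (mu + 1) (Lop_lower N a)"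
proof -
  have "bounded_op (mu + 1) (mu + 1) (\<lambda>v. Schain l N (Mop l (a l) (Dop l v)))" if "l \<in> {1..<N}" for l
  proof (rule bounded_op_comp[OF bounded_op_comp[OF Dop_bounded Mop_bounded]])
    show "l < N" using that by simp
    show "bounded_op mu (mu + 1) (Schain l N)"
      using that bounded_op_mono_target[OF Schain_bounded_gain[of l mu N], of "mu + 1"] by simp
  qed
  then have "bounded_op (mu + 1) (mu + 1) (\<lambda>v j. \<Sum>l\<in>{1..<N}. Schain l N (Mop l (a l) (Dop l v)) j)"
    by (intro bounded_op_sum) auto
  moreover have "bounded_op (mu + 1) (mu + 1) (\<lambda>v. Schain 0 N (Mop 0 (a 0) v))"
    using bounded_op_comp[OF Mop_bounded Schain_bounded] N_ge_1 by simp
  ultimately show ?thesis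
    unfolding Lop_lower_def[abs_def] by (rule bounded_op_add)
qed

lemma Lop_lower_linear_on: "linear_on (mu + 1) (Lop_lower N a)"
proof -
  have "linear_on (mu + 1) (\<lambda>v. Schain l N (Mop l (a l) (Dop l v)))" if "l \<in> {1..<N}" for l
  proof (rule linear_on_comp[OF _ _ Schain_linear_on])
    show "linear_on (mu + 1) (\<lambda>v. Mop l (a l) (Dop l v))"
      using that by (intro linear_on_comp[OF Dop_linear_on Dop_bounded Mop_a_linear_on]) simp
    show "bounded_op (mu + 1) mu (\<lambda>v. Mop l (a l) (Dop l v))"
      using that by (intro bounded_op_comp[OF Dop_bounded Mop_bounded]) simp
  qed
  then have "linear_on (mu + 1) (\<lambda>v j. \<Sum>l\<in>{1..<N}. Schain l N (Mop l (a l) (Dop l v)) j)"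
    by (intro linear_on_sum) auto
  moreover have "linear_on (mu + 1) (\<lambda>v. Schain 0 N (Mop 0 (a 0) v))"
    using N_ge_1 by (intro linear_on_comp[OF Mop_a_linear_on Mop_bounded Schain_linear_on]) simp_all
  ultimately show ?thesis
    unfolding Lop_lower_def[abs_def] by (rule linear_on_add)
qed

lemma boundary_rows_bounded:
  assumes D: "D \<le> mu"
  shows "bounded_op mu mu (boundary_rows N b)"
proof -
  obtain CB where CB: "\<And>v i. v \<in> l2 D \<Longrightarrow> i < N \<Longrightarrow> cmod (Bapp b v i) \<le> CB * l2norm D v"
    using Bapp_bounded by blast
  have "(cmod (Bapp b v i))\<^sup>2 \<le> CB\<^sup>2 * l2sq mu v" if v: "v \<in> l2 mu" and i: "i < N" for v i
  proof -
    have vD: "v \<in> l2 D" and sqD: "l2sq D v \<le> l2sq mu v"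
      using l2_antimono[OF v D] by auto
    have "(cmod (Bapp b v i))\<^sup>2 \<le> (CB * sqrt (l2sq D v))\<^sup>2"
      using CB[OF vD i] by (intro power_mono) (auto simp: l2norm_eq_sqrt_l2sq)
    also have "\<dots> \<le> CB\<^sup>2 * l2sq mu v"
      using sqD l2sq_nonneg[OF vD] by (simp add: power_mult_distrib mult_left_mono)
    finally show ?thesis .
  qed
  then have "bounded_op mu mu (\<lambda>v i. if i < N then Bapp b v i else 0)"
    by (intro bounded_op_of_finite_rows[of "CB\<^sup>2"]) auto
  moreover have "bounded_op mu mu (\<lambda>v i. (if i < N then 1 else 0) * v (i + 0))"
    by (rule bounded_op_weighted_shift[where C = 1]) (simp_all add: l2_weight_nonneg)
  moreover have "boundary_rows N b = (\<lambda>v i. (if i < N then Bapp b v i else 0) - (if i < N then 1 else 0) * v (i + 0))"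
    by (simp add: fun_eq_iff boundary_rows_def)
  ultimately show ?thesis
    using bounded_op_diff by simp
qed

lemma boundary_rows_linear_on:
  assumes D: "D \<le> mu"
  shows "linear_on mu (boundary_rows N b)"
proof -
  have "Bapp b (\<lambda>k. x * u k + y * v k) i = x * Bapp b u i + y * Bapp b v i"
    if "u \<in> l2 mu" "v \<in> l2 mu" "i < N" for u v x y i
    unfolding Bapp_def using that l2_antimono[OF _ D]
    by (intro suminf_mult_lincomb Bapp_summable) auto
  then show ?thesis
    by (auto simp: linear_on_def boundary_rows_def fun_eq_iff algebra_simps)
qed

lemma BL_perturb_bounded: "D \<le> mu + 1 \<Longrightarrow> bounded_op (mu + 1) (mu + 1) (BL_perturb N b a)"
  unfolding BL_perturb_def[abs_def]
  by (intro bounded_op_add boundary_rows_bounded bounded_op_pad Lop_lower_bounded)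

lemma BL_perturb_linear_on: "D \<le> mu + 1 \<Longrightarrow> linear_on (mu + 1) (BL_perturb N b a)"
  unfolding BL_perturb_def[abs_def]
  by (intro linear_on_add boundary_rows_linear_on linear_on_pad Lop_lower_linear_on)

lemma BL_bounded:
  assumes "D \<le> mu + 1"
  shows "bounded_op (mu + 1) mu (BL N b a)"
proof -
  have "(cmod (BL_diag N j))\<^sup>2 * l2_weight mu j \<le> (Dop_const N)\<^sup>2 * l2_weight (mu + 1) (j + 0)" for j
    using mult_right_mono[OF BL_diag_upper l2_weight_nonneg, of N j mu]
    by (simp only: add_0_right l2_weight_plus_1 mult.assoc)
  then have "bounded_op (mu + 1) mu (\<lambda>v i. BL_diag N i * v (i + 0))"
    by (rule bounded_op_weighted_shift[OF zero_le_power2])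
  moreover have "BL N b a = (\<lambda>v i. BL_diag N i * v (i + 0) + BL_perturb N b a v i)"
    by (simp add: fun_eq_iff BL_eq_diag_plus_perturb)
  ultimately show ?thesis
    using bounded_op_add bounded_op_mono_target[OF BL_perturb_bounded[OF assms]] by simp
qed

end

lemma ultraspherical_systemI:
  assumes "N \<ge> 1"
    and M: "\<forall>l<N. \<forall>mu. \<exists>C. \<forall>v\<in>l2 mu. (\<forall>j. summable (\<lambda>k. Mmat l (a l) j k * v k))
      \<and> Mop l (a l) v \<in> l2 mu \<and> l2norm mu (Mop l (a l) v) \<le> C * l2norm mu v"
    and B: "\<exists>C. \<forall>v\<in>l2 D. \<forall>i<N. summable (\<lambda>k. b i k * v k) \<and> cmod (Bapp b v i) \<le> C * l2norm D v"
  shows "ultraspherical_system N a b D"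
proof
  show "bounded_op mu mu (Mop l (a l))" if l: "l < N" for l mu
  proof -
    obtain C where "\<forall>v\<in>l2 mu. Mop l (a l) v \<in> l2 mu \<and> l2norm mu (Mop l (a l) v) \<le> C * l2norm mu v"
      using M l by blast
    then show ?thesis
      by (intro bounded_op_of_l2norm_bound) blast
  qed
qed (use assms in blast)+

section \<open>Stability of the finite sections\<close>

definition finite_section_stable :: "real \<Rightarrow> (seq \<Rightarrow> seq) \<Rightarrow> real \<Rightarrow> nat \<Rightarrow> bool" where
  "finite_section_stable mu A c n \<longleftrightarrow>
     (\<forall>w. (\<forall>k\<ge>n. w k = 0) \<longrightarrow> l2sq (mu + 1) w \<le> c * l2sq mu (trunc n (A w)))"

lemma unstable_imp_normalized_sequence:
  assumes lin: "linear_on (mu + 1) A" and bnd: "bounded_op (mu + 1) mu A"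
    and unstable: "\<not> (\<exists>c\<ge>0. \<exists>n0. \<forall>n\<ge>n0. finite_section_stable mu A c n)"
  obtains nn v where "\<And>j. j \<le> nn j" and "\<And>j k. nn j \<le> k \<Longrightarrow> v j k = 0"
    and "\<And>j. l2sq (mu + 1) (v j) = 1" and "\<And>j. l2sq mu (trunc (nn j) (A (v j))) \<le> 1 / (real j + 1)"
proof -
  have "\<exists>n w. j \<le> n \<and> (\<forall>k\<ge>n. w k = 0) \<and> (real j + 1) * l2sq mu (trunc n (A w)) < l2sq (mu + 1) w" for j
    using unstable by (auto simp: finite_section_stable_def not_le dest!: spec[of _ "real j + 1"] spec[of _ j])
  then obtain nn ww where nn: "\<And>j. j \<le> nn j" and ww: "\<And>j k. nn j \<le> k \<Longrightarrow> ww j k = 0"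
    and bad: "\<And>j. (real j + 1) * l2sq mu (trunc (nn j) (A (ww j))) < l2sq (mu + 1) (ww j)"
    by metis
  have ww_l2: "ww j \<in> l2 (mu + 1)" for j
    using ww by (intro finite_support_in_l2) blast
  have tr: "trunc (nn j) (A (ww j)) \<in> l2 mu" for j
    using trunc_in_l2[OF bounded_op_l2[OF bnd ww_l2]] by blast
  have pos: "0 < l2sq (mu + 1) (ww j)" for j
    using bad[of j] l2sq_nonneg[OF tr[of j]] by (smt (verit) mult_nonneg_nonneg of_nat_0_le_iff)
  define cc where "cc j = complex_of_real (1 / sqrt (l2sq (mu + 1) (ww j)))" for j
  have cc: "(cmod (cc j))\<^sup>2 = 1 / l2sq (mu + 1) (ww j)" for j
  proof -
    have "cmod (cc j) = 1 / sqrt (l2sq (mu + 1) (ww j))"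
      unfolding cc_def norm_of_real using pos[of j] by simp
    then show ?thesis
      using pos[of j] by (simp add: power_divide)
  qed
  define v where "v j k = cc j * ww j k" for j k
  show ?thesis
  proof (rule that[OF nn])
    show "nn j \<le> k \<Longrightarrow> v j k = 0" for j k
      by (simp add: v_def ww)
    show "l2sq (mu + 1) (v j) = 1" for j
      using l2_scale[OF ww_l2, of "cc j"] cc[of j] pos[of j] by (simp add: v_def[abs_def])
    have "trunc (nn j) (A (v j)) = (\<lambda>k. cc j * trunc (nn j) (A (ww j)) k)" for j
      using linear_on_scale[OF lin ww_l2] by (simp add: v_def[abs_def] trunc_def fun_eq_iff)
    then have "l2sq mu (trunc (nn j) (A (v j))) = l2sq mu (trunc (nn j) (A (ww j))) / l2sq (mu + 1) (ww j)" for j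
      using l2_scale[OF tr[of j], of "cc j"] cc[of j] by simp
    moreover have "l2sq mu (trunc (nn j) (A (ww j))) * (real j + 1) \<le> l2sq (mu + 1) (ww j)" for j
      using bad[of j] by (simp add: mult.commute)
    ultimately show "l2sq mu (trunc (nn j) (A (v j))) \<le> 1 / (real j + 1)" for j
      using pos[of j] by (simp add: field_simps)
  qed
qed

lemma finite_section_unique:
  assumes "finite_section_stable mu A c n" and "\<forall>k\<ge>n. v k = 0" and "\<forall>i<n. A v i = 0"
  shows "v = (\<lambda>k. 0)"
proof -
  have "trunc n (A v) = (\<lambda>k. 0)"
    using assms(3) by (auto simp: trunc_def)
  moreover have "l2sq (mu + 1) v \<le> c * l2sq mu (trunc n (A v))"
    using assms(1,2) unfolding finite_section_stable_def by blast
  ultimately have "l2sq (mu + 1) v \<le> 0"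
    by (simp add: l2sq_zero)
  then show ?thesis
    using l2sq_eq_0_iff l2sq_nonneg finite_support_in_l2[OF assms(2)] by (metis order_antisym)
qed

text \<open>Quasi-optimality (C\'ea's lemma): compare \<open>w\<close> with the truncation of \<open>u\<close>; their difference
  is supported below \<open>n\<close> and has the same residual as the truncation error \<open>trunc n u - u\<close>.\<close>

lemma finite_section_quasi_optimal:
  assumes stab: "finite_section_stable mu A c n" and c: "c \<ge> 0"
    and lin: "linear_on (mu + 1) A"
    and bnd: "\<And>v. v \<in> l2 (mu + 1) \<Longrightarrow> A v \<in> l2 mu \<and> l2sq mu (A v) \<le> B * l2sq (mu + 1) v"
    and u: "u \<in> l2 (mu + 1)" and w: "\<forall>k\<ge>n. w k = 0" and eq: "\<forall>i<n. A w i = A u i"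
  shows "l2sq (mu + 1) (\<lambda>k. u k - w k) \<le> (2 + 2 * c * B) * l2sq (mu + 1) (\<lambda>k. u k - trunc n u k)"
proof -
  define e where "e k = trunc n u k - w k" for k
  define t where "t k = u k - trunc n u k" for k
  have tu: "trunc n u \<in> l2 (mu + 1)"
    using trunc_in_l2[OF u] by blast
  have e_supp: "\<forall>k\<ge>n. e k = 0"
    using w by (simp add: e_def trunc_def)
  have e: "e \<in> l2 (mu + 1)"
    using e_supp by (rule finite_support_in_l2)
  have t: "t \<in> l2 (mu + 1)" and ut: "(\<lambda>k. trunc n u k - u k) \<in> l2 (mu + 1)"
    using l2_diff[OF u tu] l2_diff[OF tu u] by (auto simp: t_def[abs_def])
  have "trunc n (A e) = trunc n (A (\<lambda>k. trunc n u k - u k))"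
    using linear_on_diff[OF lin tu finite_support_in_l2[OF w]] linear_on_diff[OF lin tu u] eq
    by (auto simp: e_def[abs_def] trunc_def fun_eq_iff)
  then have "l2sq (mu + 1) e \<le> c * l2sq mu (trunc n (A (\<lambda>k. trunc n u k - u k)))"
    using stab e_supp unfolding finite_section_stable_def by metis
  also have "\<dots> \<le> c * (B * l2sq (mu + 1) t)"
  proof (rule mult_left_mono[OF _ c])
    have "l2sq mu (trunc n (A (\<lambda>k. trunc n u k - u k))) \<le> l2sq mu (A (\<lambda>k. trunc n u k - u k))"
      using trunc_in_l2 bnd[OF ut] by blast
    also have "\<dots> \<le> B * l2sq (mu + 1) t"
      using bnd[OF ut] l2sq_diff_commute[of "mu + 1" "trunc n u" u] by (simp add: t_def[abs_def])
    finally show "l2sq mu (trunc n (A (\<lambda>k. trunc n u k - u k))) \<le> B * l2sq (mu + 1) t" .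
  qed
  finally have "l2sq (mu + 1) e \<le> c * B * l2sq (mu + 1) t"
    by simp
  moreover have "(\<lambda>k. u k - w k) = (\<lambda>k. t k + e k)" and "(\<lambda>k. u k - trunc n u k) = t"
    by (simp_all add: e_def t_def fun_eq_iff)
  ultimately show ?thesis
    using l2_add[OF t e] by (simp add: algebra_simps)
qed

text \<open>Since \<open>K\<close> is bounded on \<open>l2 (mu + 1)\<close>, it is compact as a map into \<open>l2 mu\<close>; this is what
  the stability argument below exploits.\<close>

locale diag_plus_compact =
  fixes mu cd :: real and d :: "nat \<Rightarrow> complex" and K A :: "seq \<Rightarrow> seq"
  assumes A_eq: "\<And>v i. A v i = d i * v i + K v i"
    and d_lower: "\<And>i. (real i + 1)\<^sup>2 \<le> cd * (cmod (d i))\<^sup>2"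
    and K_bounded: "bounded_op (mu + 1) (mu + 1) K"
    and K_linear: "linear_on (mu + 1) K"
    and A_bounded: "bounded_op (mu + 1) mu A"
    and A_inj: "inj_on A (l2 (mu + 1))"
begin

lemma d_nonzero: "d i \<noteq> 0"
  using d_lower[of i] one_le_power[of "real i + 1" 2] by auto

lemma cd_nonneg: "cd \<ge> 0"
proof (rule ccontr)
  assume "\<not> cd \<ge> 0"
  then have "cd * (cmod (d 0))\<^sup>2 \<le> 0"
    by (intro mult_nonpos_nonneg) auto
  with d_lower[of 0] show False by simp
qed

lemma A_linear: "linear_on (mu + 1) A"
  unfolding linear_on_def by (simp add: A_eq linear_onD[OF K_linear] fun_eq_iff algebra_simps)

lemma diag_inverse_bounded: "bounded_op mu (mu + 1) (\<lambda>e k. e k / d k)"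
proof -
  have le: "(cmod (e k / d k))\<^sup>2 * l2_weight (mu + 1) k \<le> cd * ((cmod (e k))\<^sup>2 * l2_weight mu k)" for e k
  proof -
    have "(real k + 1)\<^sup>2 / (cmod (d k))\<^sup>2 \<le> cd"
      using d_lower[of k] d_nonzero[of k] by (simp add: divide_le_eq)
    then have "(cmod (e k))\<^sup>2 * l2_weight mu k * ((real k + 1)\<^sup>2 / (cmod (d k))\<^sup>2)
        \<le> (cmod (e k))\<^sup>2 * l2_weight mu k * cd"
      by (rule mult_left_mono[OF _ l2sq_term_nonneg])
    then show ?thesis
      by (simp only: l2_weight_plus_1) (simp add: norm_divide power_divide algebra_simps)
  qed
  have "e \<in> l2 mu \<Longrightarrow> (\<lambda>k. e k / d k) \<in> l2 (mu + 1) \<and> l2sq (mu + 1) (\<lambda>k. e k / d k) \<le> cd * l2sq mu e"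
    for e by (rule l2_dominated[OF _ cd_nonneg le])
  then show ?thesis
    unfolding bounded_op_def using cd_nonneg by blast
qed

lemma diag_residual_tendsto:
  assumes v: "\<And>i. v i \<in> l2 (mu + 1)" and supp: "\<And>i k. m i \<le> k \<Longrightarrow> v i k = 0" and m: "\<And>i. i \<le> m i"
    and A_trunc: "(\<lambda>i. l2sq mu (trunc (m i) (A (v i)))) \<longlonglongrightarrow> 0"
    and y: "y \<in> l2 mu" and Ky: "(\<lambda>i. l2sq mu (\<lambda>k. K (v i) k - y k)) \<longlonglongrightarrow> 0"
  shows "(\<lambda>i. l2sq (mu + 1) (\<lambda>k. v i k - - y k / d k)) \<longlonglongrightarrow> 0"
proof -
  have Av: "A (v i) \<in> l2 mu" and Kv: "K (v i) \<in> l2 mu" for i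
    using bounded_op_l2[OF A_bounded v] l2_antimono[OF bounded_op_l2[OF K_bounded v], of mu] by auto
  define E where "E i = (\<lambda>k. trunc (m i) (A (v i)) k
    + (trunc (m i) (\<lambda>k. y k - K (v i) k) k + (y k - trunc (m i) y k)))" for i
  text \<open>Since \<open>v i\<close> vanishes from \<open>m i\<close> on, \<open>d \<cdot> v i + y\<close> splits into the truncated residual,
    the truncated approximation error of \<open>y\<close> and the tail of \<open>y\<close>.\<close>
  have E_eq: "E i k = d k * v i k + y k" for i k
    by (cases "m i \<le> k") (auto simp: E_def trunc_def A_eq supp)
  have tail: "(\<lambda>i. l2sq mu (\<lambda>k. y k - trunc (m i) y k)) \<longlonglongrightarrow> 0"
    using filterlim_compose[OF l2sq_tail_tendsto_0[OF y] filterlim_at_top_mono[OF filterlim_ident]] m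
    by simp
  have approx: "(\<lambda>i. l2sq mu (trunc (m i) (\<lambda>k. y k - K (v i) k))) \<longlonglongrightarrow> 0"
  proof (rule l2sq_tendsto_0_le[OF _ _ Ky])
    show "trunc (m i) (\<lambda>k. y k - K (v i) k) \<in> l2 mu"
      and "l2sq mu (trunc (m i) (\<lambda>k. y k - K (v i) k)) \<le> l2sq mu (\<lambda>k. K (v i) k - y k)" for i
      using trunc_in_l2[OF l2_diff[OF y Kv, THEN conjunct1], of "m i"] by (auto simp: l2sq_diff_commute)
  qed
  have a1: "trunc (m i) (A (v i)) \<in> l2 mu" for i
    using trunc_in_l2[OF Av] by blast
  have a2: "trunc (m i) (\<lambda>k. y k - K (v i) k) \<in> l2 mu" for i
    using trunc_in_l2[OF l2_diff[OF y Kv, THEN conjunct1]] by blast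
  have a3: "(\<lambda>k. y k - trunc (m i) y k) \<in> l2 mu" for i
    using l2_diff[OF y trunc_in_l2[OF y, THEN conjunct1]] by blast
  have a23: "(\<lambda>k. trunc (m i) (\<lambda>k. y k - K (v i) k) k + (y k - trunc (m i) y k)) \<in> l2 mu" for i
    using l2_add[OF a2 a3] by blast
  have E: "E i \<in> l2 mu" for i
    unfolding E_def using l2_add[OF a1 a23] by blast
  have E_lim: "(\<lambda>i. l2sq mu (E i)) \<longlonglongrightarrow> 0"
    unfolding E_def by (rule l2sq_tendsto_0_add[OF a1 a23 A_trunc l2sq_tendsto_0_add[OF a2 a3 approx tail]])
  obtain C where C: "C \<ge> 0" "\<And>e. e \<in> l2 mu \<Longrightarrow> (\<lambda>k. e k / d k) \<in> l2 (mu + 1)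
      \<and> l2sq (mu + 1) (\<lambda>k. e k / d k) \<le> C * l2sq mu e"
    using bounded_opE[OF diag_inverse_bounded] by blast
  have "(\<lambda>k. v i k - - y k / d k) = (\<lambda>k. E i k / d k)" for i
    using d_nonzero by (simp add: E_eq fun_eq_iff field_simps)
  then show ?thesis
    using C(2)[OF E] by (intro l2sq_tendsto_0_le[where g = "\<lambda>i. C * l2sq mu (E i)"])
      (auto intro: tendsto_mult_right_zero E_lim)
qed

lemma diag_inverse_l2: "y \<in> l2 mu \<Longrightarrow> (\<lambda>k. - y k / d k) \<in> l2 (mu + 1)"
  using bounded_op_l2[OF diag_inverse_bounded l2_scale[of y mu "-1", THEN conjunct1]] by simp

text \<open>By continuity of \<open>K\<close> the limit \<open>z = - y / d\<close> satisfies \<open>K z = y = - d \<cdot> z\<close>.\<close>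

lemma limit_in_kernel:
  assumes v: "\<And>i. v i \<in> l2 (mu + 1)" and y: "y \<in> l2 mu"
    and Ky: "(\<lambda>i. l2sq mu (\<lambda>k. K (v i) k - y k)) \<longlonglongrightarrow> 0"
    and vz: "(\<lambda>i. l2sq (mu + 1) (\<lambda>k. v i k - - y k / d k)) \<longlonglongrightarrow> 0"
  shows "A (\<lambda>k. - y k / d k) = (\<lambda>k. 0)"
proof -
  define z where "z = (\<lambda>k. - y k / d k)"
  have z: "z \<in> l2 (mu + 1)"
    unfolding z_def by (rule diag_inverse_l2[OF y])
  have Kv: "K (v i) \<in> l2 (mu + 1)" for i
    using bounded_op_l2[OF K_bounded v] .
  have Kz: "K z \<in> l2 (mu + 1)"
    using bounded_op_l2[OF K_bounded z] .
  have "(\<lambda>i. l2sq mu (\<lambda>k. K (v i) k - K z k)) \<longlonglongrightarrow> 0"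
  proof (rule l2sq_tendsto_0_le[OF _ _ bounded_linear_op_tendsto[OF K_bounded K_linear v z]])
    show "(\<lambda>i. l2sq (mu + 1) (\<lambda>k. v i k - z k)) \<longlonglongrightarrow> 0"
      using vz by (simp add: z_def)
    fix i
    show "(\<lambda>k. K (v i) k - K z k) \<in> l2 mu"
      and "l2sq mu (\<lambda>k. K (v i) k - K z k) \<le> l2sq (mu + 1) (\<lambda>k. K (v i) k - K z k)"
      using l2_antimono[OF l2_diff[OF Kv Kz, THEN conjunct1], of mu] by auto
  qed
  then have "K z = y"
    using l2_limit_unique[OF _ _ y _ Ky] l2_antimono[OF Kv] l2_antimono[OF Kz] by simp
  moreover have "d k * z k = - y k" for k
    using d_nonzero[of k] by (simp add: z_def)
  ultimately have "A z = (\<lambda>k. 0)"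
    by (simp add: A_eq fun_eq_iff)
  then show ?thesis
    by (simp add: z_def)
qed

theorem finite_sections_stable: "\<exists>c\<ge>0. \<exists>n0. \<forall>n\<ge>n0. finite_section_stable mu A c n"
proof (rule ccontr)
  assume unstable: "\<not> ?thesis"
  obtain nn v where nn: "\<And>j. j \<le> nn j" and supp: "\<And>j k. nn j \<le> k \<Longrightarrow> v j k = 0"
    and v_norm: "\<And>j. l2sq (mu + 1) (v j) = 1"
    and v_res: "\<And>j. l2sq mu (trunc (nn j) (A (v j))) \<le> 1 / (real j + 1)"
    using unstable_imp_normalized_sequence[OF A_linear A_bounded unstable] by blast
  have v: "v j \<in> l2 (mu + 1)" for j
    using supp by (intro finite_support_in_l2) blast
  obtain CK where CK: "\<And>w. w \<in> l2 (mu + 1) \<Longrightarrow> K w \<in> l2 (mu + 1) \<and> l2sq (mu + 1) (K w) \<le> CK * l2sq (mu + 1) w"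
    using bounded_opE[OF K_bounded] by blast
  obtain r y where r: "strict_mono r" and y: "y \<in> l2 (mu + 1)"
    and Ky: "(\<lambda>i. l2sq mu (\<lambda>k. K (v (r i)) k - y k)) \<longlonglongrightarrow> 0"
    using l2_compact_embedding[of "\<lambda>j. K (v j)" mu CK] CK[OF v] v_norm by auto
  have y0: "y \<in> l2 mu"
    using l2_antimono[OF y] by simp
  have A_res: "(\<lambda>i. l2sq mu (trunc (nn (r i)) (A (v (r i))))) \<longlonglongrightarrow> 0"
  proof (rule l2sq_tendsto_0_le[OF _ _ LIMSEQ_inverse_real_of_nat])
    show "trunc (nn (r i)) (A (v (r i))) \<in> l2 mu" for i
      using trunc_in_l2[OF bounded_op_l2[OF A_bounded v]] by blast
    show "l2sq mu (trunc (nn (r i)) (A (v (r i)))) \<le> inverse (real (Suc i))" for i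
    proof -
      have "1 / (real (r i) + 1) \<le> 1 / (real i + 1)"
        using seq_suble[OF r, of i] by (intro divide_left_mono) auto
      moreover have "1 / (real i + 1) = inverse (real (Suc i))"
        by (simp add: inverse_eq_divide)
      ultimately show ?thesis
        using v_res[of "r i"] by linarith
    qed
  qed
  have vz: "(\<lambda>i. l2sq (mu + 1) (\<lambda>k. v (r i) k - - y k / d k)) \<longlonglongrightarrow> 0"
  proof (rule diag_residual_tendsto[OF v _ _ A_res y0 Ky])
    show "nn (r i) \<le> k \<Longrightarrow> v (r i) k = 0" for i k by (rule supp)
    show "i \<le> nn (r i)" for i using seq_suble[OF r, of i] nn[of "r i"] by linarith
  qed
  have "A (\<lambda>k. - y k / d k) = A (\<lambda>k. 0)"
    using limit_in_kernel[OF v y0 Ky vz] linear_on_zero[OF A_linear] by simp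
  then have "(\<lambda>k. - y k / d k) = (\<lambda>k. 0)"
    using A_inj diag_inverse_l2[OF y0] zero_in_l2 by (simp add: inj_on_eq_iff)
  then have "(\<lambda>k. v (r i) k - - y k / d k) = v (r i)" for i
    by (simp add: fun_eq_iff)
  then have "(\<lambda>i. 1 :: real) \<longlonglongrightarrow> 0"
    using vz v_norm by simp
  then show False
    by (simp add: LIMSEQ_const_iff)
qed

lemma finite_sections_quasi_optimal:
  assumes u: "u \<in> l2 (mu + 1)"
  shows "\<exists>C n0. \<forall>n\<ge>n0. (\<forall>v. (\<forall>k\<ge>n. v k = 0) \<longrightarrow> (\<forall>i<n. A v i = 0) \<longrightarrow> v = (\<lambda>k. 0))
    \<and> (\<forall>w. (\<forall>k\<ge>n. w k = 0) \<longrightarrow> (\<forall>i<n. A w i = A u i)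
         \<longrightarrow> l2norm (mu + 1) (\<lambda>k. u k - w k) \<le> C * l2norm (mu + 1) (\<lambda>k. u k - trunc n u k))"
proof -
  obtain c n0 where c: "c \<ge> 0" and stab: "\<And>n. n \<ge> n0 \<Longrightarrow> finite_section_stable mu A c n"
    using finite_sections_stable by blast
  obtain B where B: "\<And>v. v \<in> l2 (mu + 1) \<Longrightarrow> A v \<in> l2 mu \<and> l2sq mu (A v) \<le> B * l2sq (mu + 1) v"
    using bounded_opE[OF A_bounded] by blast
  have "l2norm (mu + 1) (\<lambda>k. u k - w k) \<le> sqrt (2 + 2 * c * B) * l2norm (mu + 1) (\<lambda>k. u k - trunc n u k)"
    if "n \<ge> n0" and "\<forall>k\<ge>n. w k = 0" and "\<forall>i<n. A w i = A u i" for n w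
    using finite_section_quasi_optimal[OF stab[OF that(1)] c A_linear B u that(2,3)]
    by (simp add: l2norm_eq_sqrt_l2sq real_sqrt_mult[symmetric])
  then show ?thesis
    using finite_section_unique[OF stab] by blast
qed

end

theorem theorem4p5:
  fixes N :: nat and a :: "nat \<Rightarrow> real \<Rightarrow> complex" and b :: "nat \<Rightarrow> nat \<Rightarrow> complex"
    and D lam :: int and c :: "nat \<Rightarrow> complex" and f u :: seq
  assumes N1: "N \<ge> 1"
    and a_cont: "\<forall>l<N. continuous_on {-1..1} (a l)"
    and M_bdd: "\<forall>l<N. \<forall>mu::real. \<exists>C. \<forall>v\<in>l2 mu.
                  (\<forall>j. summable (\<lambda>k. Mmat l (a l) j k * v k))
                  \<and> Mop l (a l) v \<in> l2 mu \<and> l2norm mu (Mop l (a l) v) \<le> C * l2norm mu v"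
    and B_bdd: "\<exists>C. \<forall>v\<in>l2 (real_of_int D). \<forall>i<N.
                  summable (\<lambda>k. b i k * v k) \<and> cmod (Bapp b v i) \<le> C * l2norm (real_of_int D) v"
    and lam: "lam \<ge> D - 1"
    and f: "f \<in> l2 (real_of_int lam - real N + 1)"
    and inv: "bij_betw (BL N b a) (l2 (real_of_int lam + 1)) (l2 (real_of_int lam))"
    and u: "u \<in> l2 (real_of_int lam + 1)"
    and sol: "BL N b a u = (\<lambda>k. if k < N then c k else Schain 0 N f (k - N))"
  shows "(\<exists>C. \<exists>n0. \<forall>n\<ge>n0.
            (\<forall>v. (\<forall>k\<ge>n. v k = 0) \<longrightarrow> (\<forall>i<n. BL N b a v i = 0) \<longrightarrow> v = (\<lambda>k. 0))
          \<and> (\<forall>w. (\<forall>k\<ge>n. w k = 0)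
                 \<longrightarrow> (\<forall>i<n. BL N b a w i = (if i < N then c i else Schain 0 N f (i - N)))
                 \<longrightarrow> l2norm (real_of_int lam + 1) (\<lambda>k. u k - w k)
                     \<le> C * l2norm (real_of_int lam + 1) (\<lambda>k. u k - trunc n u k)))
        \<and> (\<lambda>n. l2norm (real_of_int lam + 1) (\<lambda>k. u k - trunc n u k)) \<longlonglongrightarrow> 0"
proof -
  define mu where "mu = real_of_int lam"
  have D: "real_of_int D \<le> mu + 1"
    using lam by (simp add: mu_def)
  have u: "u \<in> l2 (mu + 1)"
    using u by (simp add: mu_def)
  interpret sys: ultraspherical_system N a b "real_of_int D"
    by (rule ultraspherical_systemI[OF N1 M_bdd B_bdd])
  interpret diag_plus_compact mu "4 * (real N)\<^sup>2" "BL_diag N" "BL_perturb N b a" "BL N b a"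
  proof
    show "inj_on (BL N b a) (l2 (mu + 1))"
      using bij_betw_imp_inj_on[OF inv] by (simp add: mu_def)
  qed (rule BL_eq_diag_plus_perturb BL_diag_lower[OF N1] sys.BL_perturb_bounded[OF D]
      sys.BL_perturb_linear_on[OF D] sys.BL_bounded[OF D])+
  have "(\<lambda>n. l2norm (mu + 1) (\<lambda>k. u k - trunc n u k)) \<longlonglongrightarrow> 0"
    using tendsto_real_sqrt[OF l2sq_tail_tendsto_0[OF u]] by (simp add: l2norm_eq_sqrt_l2sq)
  with finite_sections_quasi_optimal[OF u] show ?thesis
    unfolding sol mu_def by simp
qed

end
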